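(* Let $A\in\mathbb{C}^{p\times p}$ and $C\in\mathbb{C}^{q\times q}$ be Hermitian positive semidefinite, $B\in\mathbb{C}^{p\times q}$, and $H=\begin{bmatrix} A & B\\ B^* & -C\end{bmatrix}$. Decompose $\mathbb{C}^p=\mathcal{R}(A)\oplus\mathcal{N}(A)$ and $\mathbb{C}^q=\mathcal{R}(C)\oplus\mathcal{N}(C)$ (orthogonal decompositions into range and null-space). Let $A_1$ be the restriction of $A$ to $\mathcal{R}(A)$ and $C_1$ the restriction of $C$ to $\mathcal{R}(C)$ (these are positive definite), and write $B$ in block form with respect to these decompositions, \[ B=\begin{bmatrix} B_{11} & B_{12}\\ B_{21} & B_{22}\end{bmatrix}, \] where $B_{11}:\mathcal{R}(C)\to\mathcal{R}(A)$, $B_{12}:\mathcal{N}(C)\to\mathcal{R}(A)$, $B_{21}:\mathcal{R}(C)\to\mathcal{N}(A)$, $B_{22}:\mathcal{N}(C)\to\mathcal{N}(A)$ are the corresponding compressions of $B$. Assume that $\dim\mathcal{N}(A)=\dim\mathcal{N}(C)$ and that $B_{22}$ is nonsingular. Then $(-\epsilon,\epsilon)\cap\sigma(H)=\emptyset$, where \[ \epsilon=\frac{1}{\bigl(1+\max\{\|B_{12}B_{22}^{-1}\|,\ \|B_{21}^*B_{22}^{-*}\|\}\bigr)^2\ \max\{\|A_1^{-1}\|,\ \|C_1^{-1}\|,\ \|B_{22}^{-1}\|\}}. \]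
   Context: $\mathcal{R}$ and $\mathcal{N}$ denote range and null-space, $\sigma$ the spectrum, $\|\cdot\|$ the spectral norm, and $B_{22}^{-*}=(B_{22}^{-1})^*$. *)

theory Defs
  imports "Jordan_Normal_Form.Schur_Decomposition" "Jordan_Normal_Form.Char_Poly"
          "Jordan_Normal_Form.Matrix_Kernel"
begin

definition hermitian_mat :: "complex mat \<Rightarrow> bool" where
  "hermitian_mat M \<longleftrightarrow> square_mat M \<and> mat_adjoint M = M"

definition psd_mat :: "complex mat \<Rightarrow> bool" where
  "psd_mat M \<longleftrightarrow> hermitian_mat M \<and>
     (\<forall>x \<in> carrier_vec (dim_col M). (M *\<^sub>v x) \<bullet>c x \<ge> 0)"

definition mat_range :: "complex mat \<Rightarrow> complex vec set" where
  "mat_range M = {M *\<^sub>v x | x. x \<in> carrier_vec (dim_col M)}"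

definition vnorm :: "complex vec \<Rightarrow> real" where
  "vnorm v = sqrt (Re (v \<bullet>c v))"

definition orth_proj :: "complex vec set \<Rightarrow> complex vec \<Rightarrow> complex vec" where
  "orth_proj S v = (THE w. w \<in> S \<and> (\<forall>u\<in>S. (v - w) \<bullet>c u = 0))"

definition opnorm_on :: "complex vec set \<Rightarrow> (complex vec \<Rightarrow> complex vec) \<Rightarrow> real" where
  "opnorm_on S f = Sup {vnorm (f x) | x. x \<in> S \<and> vnorm x \<le> 1}"

definition sub_adjoint :: "complex vec set \<Rightarrow> complex vec set \<Rightarrow>
     (complex vec \<Rightarrow> complex vec) \<Rightarrow> complex vec \<Rightarrow> complex vec" where
  "sub_adjoint S T f y = (THE x. x \<in> S \<and> (\<forall>u\<in>S. f u \<bullet>c y = u \<bullet>c x))"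

definition compression :: "complex mat \<Rightarrow> complex vec set \<Rightarrow> complex vec \<Rightarrow> complex vec" where
  "compression M T x = orth_proj T (M *\<^sub>v x)"

definition spectrum_mat :: "complex mat \<Rightarrow> complex set" where
  "spectrum_mat M = {k. eigenvalue M k}"

end

(*
  Let H v = t v with v = (x, y) nonzero, and split x = x1 + x2 and y = y1 + y2 along
  range and kernel of A and C. Pairing the two block rows with x and y and subtracting
  gives the energy identity <A x1, x1> + <C y1, y1> = t (|x|^2 - |y|^2). Projecting the
  rows onto the kernels and inverting B22 expresses x2 and y2 through t, x1, y1 and the
  couplings B12 B22^-1 and B21^* B22^-*; this yields
    |x2| <= |t| |B22^-1| |y2| + n |x1|  and  |y2| <= |t| |B22^-1| |x2| + n |y1|,
  while the energy identity together with <A x1, x1> >= |x1|^2 / |A1^-1| (and likewise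
  for C) bounds |x1|^2 + |y1|^2. For |t| < epsilon these estimates force all four
  components to vanish.
*)
theory Submission
  imports Defs
begin

section \<open>Inner product and norm on complex vectors\<close>

lemma conjugate_diff_vec: "v \<in> carrier_vec n \<Longrightarrow> w \<in> carrier_vec n \<Longrightarrow>
   conjugate (v - (w::complex vec)) = conjugate v - conjugate w"
  by (intro eq_vecI) auto

lemma cscalar_prod_add_left: "u \<in> carrier_vec n \<Longrightarrow> v \<in> carrier_vec n \<Longrightarrow> w \<in> carrier_vec n \<Longrightarrow>
  (u + v) \<bullet>c w = u \<bullet>c w + v \<bullet>c (w::complex vec)"
  by (rule add_scalar_prod_distrib[of _ n]) auto

lemma cscalar_prod_add_right: "u \<in> carrier_vec n \<Longrightarrow> v \<in> carrier_vec n \<Longrightarrow> w \<in> carrier_vec n \<Longrightarrow>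
  u \<bullet>c (v + w) = u \<bullet>c v + u \<bullet>c (w::complex vec)"
  by (simp add: conjugate_add_vec[of _ n] scalar_prod_add_distrib[of _ n])

lemma cscalar_prod_diff_left: "u \<in> carrier_vec n \<Longrightarrow> v \<in> carrier_vec n \<Longrightarrow> w \<in> carrier_vec n \<Longrightarrow>
  (u - v) \<bullet>c w = u \<bullet>c w - v \<bullet>c (w::complex vec)"
  by (rule minus_scalar_prod_distrib[of _ n]) auto

lemma cscalar_prod_diff_right: "u \<in> carrier_vec n \<Longrightarrow> v \<in> carrier_vec n \<Longrightarrow> w \<in> carrier_vec n \<Longrightarrow>
  u \<bullet>c (v - w) = u \<bullet>c v - u \<bullet>c (w::complex vec)"
  by (simp add: conjugate_diff_vec[of _ n] scalar_prod_minus_distrib[of _ n])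

lemma cscalar_prod_smult_left: "u \<in> carrier_vec n \<Longrightarrow> w \<in> carrier_vec n \<Longrightarrow>
  (c \<cdot>\<^sub>v u) \<bullet>c w = c * (u \<bullet>c (w::complex vec))"
  by (rule smult_scalar_prod_distrib[of _ n]) auto

lemma cscalar_prod_smult_right: "u \<in> carrier_vec n \<Longrightarrow> w \<in> carrier_vec n \<Longrightarrow>
  u \<bullet>c (c \<cdot>\<^sub>v w) = cnj c * (u \<bullet>c (w::complex vec))"
  by (simp add: conjugate_smult_vec scalar_prod_smult_distrib[of _ n])

lemma cnj_cscalar_prod: "u \<in> carrier_vec n \<Longrightarrow> w \<in> carrier_vec n \<Longrightarrow>
  cnj (u \<bullet>c w) = w \<bullet>c (u::complex vec)"
proof -
  assume a: "u \<in> carrier_vec n" "w \<in> carrier_vec n"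
  have "u \<bullet>c w = cnj (conjugate u \<bullet> w)" using conjugate_conjugate_sprod[OF a] by simp
  hence "cnj (u \<bullet>c w) = conjugate u \<bullet> w" by simp
  also have "\<dots> = w \<bullet>c u" using conjugate_vec_sprod_comm[OF a(2) a(1)] by simp
  finally show ?thesis .
qed

lemma cscalar_prod_self_Re_nonneg: "0 \<le> Re (u \<bullet>c (u::complex vec))"
  using conjugate_square_ge_0_vec[of u] by (simp add: less_eq_complex_def)

lemma cscalar_prod_self_Im: "Im (u \<bullet>c (u::complex vec)) = 0"
  using conjugate_square_ge_0_vec[of u] by (simp add: less_eq_complex_def)

lemma cscalar_prod_self_real: "u \<bullet>c (u::complex vec) = of_real (Re (u \<bullet>c u))"
  using cscalar_prod_self_Im[of u] by (simp add: complex_eq_iff)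

lemma cscalar_prod_self_eq_0_iff: "u \<in> carrier_vec n \<Longrightarrow> u \<bullet>c (u::complex vec) = 0 \<longleftrightarrow> u = 0\<^sub>v n"
  by simp

lemma cscalar_prod_self_Re_eq_0_iff: "u \<in> carrier_vec n \<Longrightarrow> Re (u \<bullet>c (u::complex vec)) = 0 \<longleftrightarrow> u = 0\<^sub>v n"
  using cscalar_prod_self_eq_0_iff[of u n] cscalar_prod_self_real[of u] by (metis of_real_0 zero_complex.sel(1))

lemma vnorm_power2: "(vnorm u)^2 = Re (u \<bullet>c u)"
  unfolding vnorm_def by (rule real_sqrt_pow2[OF cscalar_prod_self_Re_nonneg])

lemma vnorm_nonneg: "0 \<le> vnorm u" unfolding vnorm_def by (simp add: cscalar_prod_self_Re_nonneg)

lemma cscalar_prod_self_vnorm: "u \<bullet>c u = of_real ((vnorm u)^2)"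
  using cscalar_prod_self_real[of u] vnorm_power2[of u] by simp

lemma vnorm_eq_0_iff: "u \<in> carrier_vec n \<Longrightarrow> vnorm u = 0 \<longleftrightarrow> u = 0\<^sub>v n"
  using cscalar_prod_self_Re_eq_0_iff[of u n] vnorm_power2[of u] by (metis power_eq_0_iff zero_less_numeral)

lemma vnorm_zero[simp]: "vnorm (0\<^sub>v n) = 0"
  using vnorm_eq_0_iff[of "0\<^sub>v n" n] by simp

lemma vnorm_smult: "u \<in> carrier_vec n \<Longrightarrow> vnorm (c \<cdot>\<^sub>v u) = cmod c * vnorm u"
proof -
  assume u: "u \<in> carrier_vec n"
  have "(c \<cdot>\<^sub>v u) \<bullet>c (c \<cdot>\<^sub>v u) = c * cnj c * (u \<bullet>c u)"
    using u by (simp add: cscalar_prod_smult_left[of _ n] cscalar_prod_smult_right[of _ n])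
  also have "\<dots> = of_real ((cmod c)^2 * (vnorm u)^2)"
  proof -
    have "c * cnj c = of_real ((cmod c)^2)" using complex_norm_square[of c] by simp
    thus ?thesis by (simp add: cscalar_prod_self_vnorm)
  qed
  finally have "(vnorm (c \<cdot>\<^sub>v u))^2 = (cmod c * vnorm u)^2"
    using vnorm_power2[of "c \<cdot>\<^sub>v u"] by (simp add: power_mult_distrib)
  thus ?thesis using vnorm_nonneg by (simp add: power2_eq_iff_nonneg)
qed

lemma vnorm_add_power2_orthogonal: assumes "u \<in> carrier_vec n" "v \<in> carrier_vec n" "u \<bullet>c v = (0::complex)"
  shows "(vnorm (u + v))^2 = (vnorm u)^2 + (vnorm v)^2"
proof -
  have vu: "v \<bullet>c u = 0" using cnj_cscalar_prod[of u n v] assms by simp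
  have "(u+v) \<bullet>c (u+v) = u \<bullet>c u + v \<bullet>c v"
    using assms vu by (simp add: cscalar_prod_add_left[of _ n] cscalar_prod_add_right[of _ n])
  thus ?thesis by (simp add: vnorm_power2)
qed

lemma cmod_cscalar_prod_le: assumes u: "u \<in> carrier_vec n" and v: "v \<in> carrier_vec n"
  shows "cmod (u \<bullet>c v) \<le> vnorm u * vnorm (v::complex vec)"
proof (cases "v = 0\<^sub>v n")
  case True thus ?thesis using u by (simp add: vnorm_nonneg)
next
  case False
  define d where "d = Re (v \<bullet>c v)"
  have d: "d > 0" using cscalar_prod_self_Re_nonneg[of v] cscalar_prod_self_Re_eq_0_iff[OF v] False d_def by force
  have vv: "v \<bullet>c v = of_real d" using cscalar_prod_self_real d_def by simp
  define c where "c = (u \<bullet>c v) / of_real d"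
  define w where "w = u - c \<cdot>\<^sub>v v"
  have w: "w \<in> carrier_vec n" using u v w_def by simp
  have wv: "w \<bullet>c (c \<cdot>\<^sub>v v) = 0"
    using u v d unfolding w_def c_def
    by (simp add: cscalar_prod_diff_left[of _ n] cscalar_prod_smult_left[of _ n] cscalar_prod_smult_right[of _ n] vv)
  have uu: "u = w + c \<cdot>\<^sub>v v" using u v unfolding w_def by auto
  have "(vnorm u)^2 = (vnorm w)^2 + (vnorm (c \<cdot>\<^sub>v v))^2"
    using vnorm_add_power2_orthogonal[OF w _ wv] v uu by simp
  hence "(cmod c * vnorm v)^2 \<le> (vnorm u)^2" using vnorm_smult[OF v] by simp
  moreover have "(cmod c * vnorm v)^2 = (cmod (u \<bullet>c v))^2 / d"
  proof -
    have vd: "(vnorm v)^2 = d" using vnorm_power2[of v] d_def by simp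
    have "(cmod c * vnorm v)^2 = (cmod (u \<bullet>c v))^2 / d^2 * (vnorm v)^2"
      unfolding c_def using d by (simp add: norm_divide power_mult_distrib power_divide)
    also have "\<dots> = (cmod (u \<bullet>c v))^2 / d" using d vd by (simp add: power2_eq_square)
    finally show ?thesis .
  qed
  ultimately have "(cmod (u \<bullet>c v))^2 \<le> (vnorm u)^2 * d" using d
    by (simp add: divide_le_eq)
  also have "\<dots> = (vnorm u * vnorm v)^2" using vnorm_power2[of v] d_def by (simp add: power_mult_distrib)
  finally show ?thesis using vnorm_nonneg[of u] vnorm_nonneg[of v]
    by (meson mult_nonneg_nonneg power2_le_imp_le)
qed

lemma cscalar_prod_sum: assumes "u \<in> carrier_vec n" "v \<in> carrier_vec n"
  shows "u \<bullet>c v = (\<Sum>i<n. u$i * cnj (v$i))"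
  using assms unfolding scalar_prod_def by (auto simp: lessThan_atLeast0)

lemma cscalar_prod_unit_vec: "(x::complex vec) \<in> carrier_vec n \<Longrightarrow> i < n \<Longrightarrow> x \<bullet>c unit_vec n i = x $ i"
proof -
  assume x: "x \<in> carrier_vec n" and i: "i < n"
  have "x \<bullet>c unit_vec n i = (\<Sum>j<n. x $ j * cnj (unit_vec n i $ j))" using x by (simp add: cscalar_prod_sum[of _ n])
  also have "\<dots> = (\<Sum>j<n. if j = i then x $ i else 0)" by (rule sum.cong) (auto simp: unit_vec_def)
  also have "\<dots> = x $ i" using i by simp
  finally show ?thesis .
qed

lemma vnorm_unit_vec: "i < n \<Longrightarrow> vnorm (unit_vec n i) = 1"
  using cscalar_prod_unit_vec[of "unit_vec n i" n i] vnorm_power2[of "unit_vec n i"]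
  by (simp add: vnorm_def)

lemma cmod_index_le_vnorm: assumes "x \<in> carrier_vec n" "i < n" shows "cmod (x $ i) \<le> vnorm x"
  using cmod_cscalar_prod_le[OF assms(1), of "unit_vec n i"] cscalar_prod_unit_vec[OF assms] vnorm_unit_vec[OF assms(2)]
  by simp

lemma smult_diff_vec: "x \<in> carrier_vec n \<Longrightarrow> y \<in> carrier_vec n \<Longrightarrow>
  (c::complex) \<cdot>\<^sub>v x - c \<cdot>\<^sub>v y = c \<cdot>\<^sub>v (x - y)"
  by (intro eq_vecI) (auto simp: algebra_simps)

lemma smult_zero_zero: "(0::complex) \<cdot>\<^sub>v 0\<^sub>v n = 0\<^sub>v n"
  by (intro eq_vecI) auto

lemma vec_eq_of_diff_eq_0: "w \<in> carrier_vec n \<Longrightarrow> w' \<in> carrier_vec n \<Longrightarrow> w - w' = 0\<^sub>v n \<Longrightarrow> w = (w'::complex vec)"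
proof -
  assume a: "w \<in> carrier_vec n" "w' \<in> carrier_vec n" "w - w' = 0\<^sub>v n"
  have "w = w' + (w - w')" using a(1,2) by auto
  thus ?thesis using a by simp
qed

lemma smult_append_vec: "x \<in> carrier_vec p \<Longrightarrow> y \<in> carrier_vec q \<Longrightarrow>
   c \<cdot>\<^sub>v (x @\<^sub>v y) = (c \<cdot>\<^sub>v x) @\<^sub>v (c \<cdot>\<^sub>v y)"
  by (intro eq_vecI) auto

lemma le_of_power2_le_mult: fixes a K :: real assumes "0 \<le> a" "a^2 \<le> a * K" "0 \<le> K" shows "a \<le> K"
proof (cases "a = 0")
  case True
  thus ?thesis using assms by (simp add: power2_eq_square)
next
  case False
  hence "a > 0" using assms by simp
  thus ?thesis using assms by (simp add: power2_eq_square mult_le_cancel_left_pos)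
qed

lemma mult_mat_vec_index: assumes "M \<in> carrier_mat m n" "x \<in> carrier_vec n" "i < m"
  shows "(M *\<^sub>v x) $ i = (\<Sum>j<n. M $$ (i,j) * x $ j)"
  using assms by (auto simp: scalar_prod_def lessThan_atLeast0 intro!: sum.cong)

lemma mat_adjoint_carrier: "M \<in> carrier_mat m n \<Longrightarrow> mat_adjoint M \<in> carrier_mat n m"
  unfolding mat_adjoint_def by auto

lemma mat_adjoint_index: "M \<in> carrier_mat m n \<Longrightarrow> i < n \<Longrightarrow> j < m \<Longrightarrow>
   mat_adjoint M $$ (i,j) = cnj (M $$ (j,i))"
  unfolding mat_adjoint_def mat_of_rows_def by auto

lemma cscalar_prod_mat_adjoint: assumes M: "(M::complex mat) \<in> carrier_mat m n" and x: "x \<in> carrier_vec n"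
  and y: "y \<in> carrier_vec m"
  shows "(M *\<^sub>v x) \<bullet>c y = x \<bullet>c (mat_adjoint M *\<^sub>v y)"
proof -
  have MA: "mat_adjoint M \<in> carrier_mat n m" using mat_adjoint_carrier[OF M] .
  have "(M *\<^sub>v x) \<bullet>c y = (\<Sum>i<m. (\<Sum>j<n. M $$ (i,j) * x $ j) * cnj (y $ i))"
    using M x y mult_mat_vec_index[OF M x] by (simp add: cscalar_prod_sum[of _ m] del: index_mult_mat_vec)
  also have "\<dots> = (\<Sum>i<m. \<Sum>j<n. x $ j * (M $$ (i,j) * cnj (y $ i)))"
    unfolding sum_distrib_right by (intro sum.cong refl) (simp add: mult.commute mult.left_commute)
  also have "\<dots> = (\<Sum>j<n. \<Sum>i<m. x $ j * (M $$ (i,j) * cnj (y $ i)))"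
    by (rule sum.swap)
  also have "\<dots> = (\<Sum>j<n. x $ j * cnj (\<Sum>i<m. mat_adjoint M $$ (j,i) * y $ i))"
    using M by (simp add: sum_distrib_left mat_adjoint_index)
  also have "\<dots> = x \<bullet>c (mat_adjoint M *\<^sub>v y)"
    using MA x y mult_mat_vec_index[OF MA y] by (simp add: cscalar_prod_sum[of _ n] del: index_mult_mat_vec)
  finally show ?thesis .
qed

lemma mat_adjoint_cscalar_prod: assumes M: "(M::complex mat) \<in> carrier_mat m n" and x: "x \<in> carrier_vec n"
  and y: "y \<in> carrier_vec m"
  shows "(mat_adjoint M *\<^sub>v y) \<bullet>c x = y \<bullet>c (M *\<^sub>v x)"
proof -
  have MA: "mat_adjoint M \<in> carrier_mat n m" using mat_adjoint_carrier[OF M] .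
  have "y \<bullet>c (M *\<^sub>v x) = cnj ((M *\<^sub>v x) \<bullet>c y)" using cnj_cscalar_prod[of "M *\<^sub>v x" m y] M x y by simp
  also have "\<dots> = cnj (x \<bullet>c (mat_adjoint M *\<^sub>v y))" using cscalar_prod_mat_adjoint[OF M x y] by simp
  also have "\<dots> = (mat_adjoint M *\<^sub>v y) \<bullet>c x" using cnj_cscalar_prod[of x n] MA x y by simp
  finally show ?thesis by simp
qed

lemma hermitian_cscalar_prod: assumes "hermitian_mat A" "A \<in> carrier_mat n n" "x \<in> carrier_vec n" "y \<in> carrier_vec n"
  shows "(A *\<^sub>v x) \<bullet>c y = x \<bullet>c (A *\<^sub>v y)"
  using cscalar_prod_mat_adjoint[of A n n x y] assms unfolding hermitian_mat_def by simp

section \<open>Subspaces admitting orthogonal projections\<close>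

definition csubspace :: "nat \<Rightarrow> complex vec set \<Rightarrow> bool" where
  "csubspace n S \<longleftrightarrow> S \<subseteq> carrier_vec n \<and> 0\<^sub>v n \<in> S \<and> (\<forall>x\<in>S. \<forall>y\<in>S. x + y \<in> S)
     \<and> (\<forall>c. \<forall>x\<in>S. c \<cdot>\<^sub>v x \<in> S)"

text \<open>Orthogonal projections exist onto every subspace of \<open>\<complex>\<^sup>n\<close>; here this is proved only for
  the subspaces that occur (spans of finitely many vectors, kernels of Hermitian matrices), so it
  is carried as a hypothesis.\<close>
definition has_orth_proj :: "nat \<Rightarrow> complex vec set \<Rightarrow> bool" where
  "has_orth_proj n S \<longleftrightarrow> (\<forall>x\<in>carrier_vec n. \<exists>w\<in>S. \<forall>u\<in>S. (x - w) \<bullet>c u = 0)"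

lemma csubspace_carrier: "csubspace n S \<Longrightarrow> x \<in> S \<Longrightarrow> x \<in> carrier_vec n"
  unfolding csubspace_def by auto

lemma csubspace_zero: "csubspace n S \<Longrightarrow> 0\<^sub>v n \<in> S"
  unfolding csubspace_def by auto

lemma csubspace_add: "csubspace n S \<Longrightarrow> x \<in> S \<Longrightarrow> y \<in> S \<Longrightarrow> x + y \<in> S"
  unfolding csubspace_def by auto

lemma csubspace_smult: "csubspace n S \<Longrightarrow> x \<in> S \<Longrightarrow> c \<cdot>\<^sub>v x \<in> S"
  unfolding csubspace_def by auto

lemma csubspace_diff: assumes "csubspace n S" "x \<in> S" "y \<in> S" shows "x - y \<in> S"
proof -
  have "x - y = x + (-1) \<cdot>\<^sub>v y" using csubspace_carrier[OF assms(1)] assms by auto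
  thus ?thesis using assms csubspace_add csubspace_smult by metis
qed

lemma orth_proj_unique: assumes S: "csubspace n S" and x: "x \<in> carrier_vec n"
  and w: "w \<in> S" "\<forall>u\<in>S. (x - w) \<bullet>c u = 0"
  and w': "w' \<in> S" "\<forall>u\<in>S. (x - w') \<bullet>c u = 0"
  shows "w = w'"
proof -
  have ww: "w - w' \<in> S" using csubspace_diff[OF S w(1) w'(1)] .
  have c: "w \<in> carrier_vec n" "w' \<in> carrier_vec n" using csubspace_carrier[OF S] w w' by auto
  have "w - w' = (x - w') - (x - w)" using c x by auto
  hence "(w - w') \<bullet>c (w - w') = (x - w') \<bullet>c (w - w') - (x - w) \<bullet>c (w - w')"
    using c x by (metis cscalar_prod_diff_left minus_carrier_vec)
  also have "\<dots> = 0" using w(2) w'(2) ww by simp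
  finally show ?thesis using c cscalar_prod_self_eq_0_iff[of "w - w'" n] vec_eq_of_diff_eq_0[of w n w'] by simp
qed

lemma orth_proj_eqI: assumes S: "csubspace n S" and x: "x \<in> carrier_vec n"
  and w: "w \<in> S" "\<forall>u\<in>S. (x - w) \<bullet>c u = 0"
  shows "orth_proj S x = w"
  unfolding orth_proj_def
  by (rule the_equality, use w in blast, use orth_proj_unique[OF S x] w in blast)

lemma orth_proj_char: assumes S: "csubspace n S" and H: "has_orth_proj n S" and x: "x \<in> carrier_vec n"
  shows "orth_proj S x \<in> S" "\<forall>u\<in>S. (x - orth_proj S x) \<bullet>c u = 0"
proof -
  obtain w where w: "w \<in> S" "\<forall>u\<in>S. (x - w) \<bullet>c u = 0" using H x unfolding has_orth_proj_def by blast
  thus "orth_proj S x \<in> S" "\<forall>u\<in>S. (x - orth_proj S x) \<bullet>c u = 0"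
    using orth_proj_eqI[OF S x w] by auto
qed

lemma orth_proj_carrier: "csubspace n S \<Longrightarrow> has_orth_proj n S \<Longrightarrow> x \<in> carrier_vec n \<Longrightarrow> orth_proj S x \<in> carrier_vec n"
  using orth_proj_char csubspace_carrier by blast

lemma orth_proj_id: assumes S: "csubspace n S" and x: "x \<in> S" shows "orth_proj S x = x"
proof -
  have xc: "x \<in> carrier_vec n" using csubspace_carrier[OF S x] .
  have "x - x = 0\<^sub>v n" using xc by auto
  hence "\<forall>u\<in>S. (x - x) \<bullet>c u = 0" using csubspace_carrier[OF S] by simp
  thus ?thesis using orth_proj_eqI[OF S xc x] by simp
qed

lemma orth_proj_add: assumes S: "csubspace n S" and H: "has_orth_proj n S" and x: "x \<in> carrier_vec n" and y: "y \<in> carrier_vec n"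
  shows "orth_proj S (x + y) = orth_proj S x + orth_proj S y"
proof (rule orth_proj_eqI[OF S])
  note px = orth_proj_char[OF S H x] and py = orth_proj_char[OF S H y]
  have c: "orth_proj S x \<in> carrier_vec n" "orth_proj S y \<in> carrier_vec n"
    using px py csubspace_carrier[OF S] by auto
  show "x + y \<in> carrier_vec n" using x y by simp
  show "orth_proj S x + orth_proj S y \<in> S" using csubspace_add[OF S px(1) py(1)] .
  show "\<forall>u\<in>S. (x + y - (orth_proj S x + orth_proj S y)) \<bullet>c u = 0"
  proof
    fix u assume u: "u \<in> S"
    have uc: "u \<in> carrier_vec n" using csubspace_carrier[OF S u] .
    have "x + y - (orth_proj S x + orth_proj S y) = (x - orth_proj S x) + (y - orth_proj S y)"
      using x y c by auto
    thus "(x + y - (orth_proj S x + orth_proj S y)) \<bullet>c u = 0"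
      using px(2) py(2) u uc x y c by (simp add: cscalar_prod_add_left[of _ n])
  qed
qed

lemma orth_proj_smult: assumes S: "csubspace n S" and H: "has_orth_proj n S" and x: "x \<in> carrier_vec n"
  shows "orth_proj S (c \<cdot>\<^sub>v x) = c \<cdot>\<^sub>v orth_proj S x"
proof (rule orth_proj_eqI[OF S])
  note px = orth_proj_char[OF S H x]
  have cx: "orth_proj S x \<in> carrier_vec n" using px csubspace_carrier[OF S] by auto
  show "c \<cdot>\<^sub>v x \<in> carrier_vec n" using x by simp
  show "c \<cdot>\<^sub>v orth_proj S x \<in> S" using csubspace_smult[OF S px(1)] .
  show "\<forall>u\<in>S. (c \<cdot>\<^sub>v x - c \<cdot>\<^sub>v orth_proj S x) \<bullet>c u = 0"
  proof
    fix u assume u: "u \<in> S"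
    have uc: "u \<in> carrier_vec n" using csubspace_carrier[OF S u] .
    have "c \<cdot>\<^sub>v x - c \<cdot>\<^sub>v orth_proj S x = c \<cdot>\<^sub>v (x - orth_proj S x)"
      using x cx by (simp add: smult_diff_vec[of _ n])
    thus "(c \<cdot>\<^sub>v x - c \<cdot>\<^sub>v orth_proj S x) \<bullet>c u = 0"
      using px(2) u uc x cx by (simp add: cscalar_prod_smult_left[of _ n])
  qed
qed

lemma cscalar_prod_orth_proj_left: assumes S: "csubspace n S" and H: "has_orth_proj n S" and x: "x \<in> carrier_vec n" and u: "u \<in> S"
  shows "x \<bullet>c u = orth_proj S x \<bullet>c u"
proof -
  note px = orth_proj_char[OF S H x]
  have c: "orth_proj S x \<in> carrier_vec n" "u \<in> carrier_vec n" using px u csubspace_carrier[OF S] by auto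
  have "(x - orth_proj S x) \<bullet>c u = 0" using px u by auto
  thus ?thesis using cscalar_prod_diff_left[OF x c(1) c(2)] by simp
qed

lemma cscalar_prod_orth_proj_right: assumes S: "csubspace n S" and H: "has_orth_proj n S" and x: "x \<in> carrier_vec n" and u: "u \<in> S"
  shows "u \<bullet>c x = u \<bullet>c orth_proj S x"
proof -
  have c: "orth_proj S x \<in> carrier_vec n" "u \<in> carrier_vec n" using orth_proj_char[OF S H x] u csubspace_carrier[OF S] by auto
  have "u \<bullet>c x = cnj (x \<bullet>c u)" using cnj_cscalar_prod[OF x c(2)] by simp
  also have "\<dots> = cnj (orth_proj S x \<bullet>c u)" using cscalar_prod_orth_proj_left[OF S H x u] by simp
  also have "\<dots> = u \<bullet>c orth_proj S x" using cnj_cscalar_prod[OF c(1) c(2)] by simp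
  finally show ?thesis .
qed

lemma csubspace_cscalar_prod_eqI: assumes S: "csubspace n S" and r: "r \<in> S" "r' \<in> S" and eq: "\<forall>u\<in>S. u \<bullet>c r = u \<bullet>c r'"
  shows "r = r'"
proof -
  have c: "r \<in> carrier_vec n" "r' \<in> carrier_vec n" using csubspace_carrier[OF S] r by auto
  have d: "r - r' \<in> S" using csubspace_diff[OF S r] .
  have "(r - r') \<bullet>c (r - r') = 0"
    using eq d c cscalar_prod_diff_right[of "r - r'" n r r'] by simp
  thus ?thesis using cscalar_prod_self_eq_0_iff[of "r - r'" n] c vec_eq_of_diff_eq_0[of r n r'] by simp
qed

definition span_list :: "nat \<Rightarrow> complex vec list \<Rightarrow> complex vec set" where
  "span_list n ws = {mat_of_cols n ws *\<^sub>v c | c. c \<in> carrier_vec (length ws)}"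

lemma mat_of_cols_Cons_mult:
  assumes v: "v \<in> carrier_vec n" and vs: "set vs \<subseteq> carrier_vec n"
  and c: "(c::complex vec) \<in> carrier_vec (Suc (length vs))"
  shows "mat_of_cols n (v # vs) *\<^sub>v c = c $ 0 \<cdot>\<^sub>v v + mat_of_cols n vs *\<^sub>v vec (length vs) (\<lambda>i. c $ Suc i)"
proof (rule eq_vecI)
  let ?k = "length vs"
  have M1: "mat_of_cols n (v # vs) \<in> carrier_mat n (Suc ?k)" using mat_of_cols_carrier(1)[of n "v#vs"] by simp
  have M2: "mat_of_cols n vs \<in> carrier_mat n ?k" using mat_of_cols_carrier(1)[of n vs] by simp
  have d: "vec ?k (\<lambda>i. c $ Suc i) \<in> carrier_vec ?k" by simp
  show "dim_vec (mat_of_cols n (v # vs) *\<^sub>v c) = dim_vec (c $ 0 \<cdot>\<^sub>v v + mat_of_cols n vs *\<^sub>v vec (length vs) (\<lambda>i. c $ Suc i))"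
    using v by simp
  fix i assume "i < dim_vec (c $ 0 \<cdot>\<^sub>v v + mat_of_cols n vs *\<^sub>v vec (length vs) (\<lambda>i. c $ Suc i))"
  hence i: "i < n" by simp
  have "(mat_of_cols n (v # vs) *\<^sub>v c) $ i = (\<Sum>j<Suc ?k. mat_of_cols n (v # vs) $$ (i,j) * c $ j)"
    using mult_mat_vec_index[OF M1 c i] .
  also have "\<dots> = mat_of_cols n (v # vs) $$ (i,0) * c $ 0 + (\<Sum>j<?k. mat_of_cols n (v # vs) $$ (i,Suc j) * c $ Suc j)"
    by (rule sum.lessThan_Suc_shift)
  also have "\<dots> = v $ i * c $ 0 + (\<Sum>j<?k. mat_of_cols n vs $$ (i,j) * vec ?k (\<lambda>i. c $ Suc i) $ j)"
    using i by (simp add: mat_of_cols_def)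
  also have "\<dots> = (c $ 0 \<cdot>\<^sub>v v + mat_of_cols n vs *\<^sub>v vec (length vs) (\<lambda>i. c $ Suc i)) $ i"
    using mult_mat_vec_index[OF M2 d i] i v by (simp add: mult.commute)
  finally show "(mat_of_cols n (v # vs) *\<^sub>v c) $ i = (c $ 0 \<cdot>\<^sub>v v + mat_of_cols n vs *\<^sub>v vec (length vs) (\<lambda>i. c $ Suc i)) $ i" .
qed

lemma span_list_Cons: assumes v: "v \<in> carrier_vec n" and vs: "set vs \<subseteq> carrier_vec n"
  shows "span_list n (v # vs) = {a \<cdot>\<^sub>v v + u | a u. u \<in> span_list n vs}"
proof
  show "span_list n (v # vs) \<subseteq> {a \<cdot>\<^sub>v v + u | a u. u \<in> span_list n vs}"
  proof
    fix x assume "x \<in> span_list n (v # vs)"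
    then obtain c where c: "c \<in> carrier_vec (Suc (length vs))" "x = mat_of_cols n (v # vs) *\<^sub>v c"
      unfolding span_list_def by auto
    have "mat_of_cols n vs *\<^sub>v vec (length vs) (\<lambda>i. c $ Suc i) \<in> span_list n vs"
      unfolding span_list_def by (intro CollectI exI[of _ "vec (length vs) (\<lambda>i. c $ Suc i)"]) auto
    thus "x \<in> {a \<cdot>\<^sub>v v + u | a u. u \<in> span_list n vs}"
      using mat_of_cols_Cons_mult[OF v vs c(1)] c(2) by blast
  qed
  show "{a \<cdot>\<^sub>v v + u | a u. u \<in> span_list n vs} \<subseteq> span_list n (v # vs)"
  proof
    fix x assume "x \<in> {a \<cdot>\<^sub>v v + u | a u. u \<in> span_list n vs}"
    then obtain a d where d: "d \<in> carrier_vec (length vs)" "x = a \<cdot>\<^sub>v v + mat_of_cols n vs *\<^sub>v d"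
      unfolding span_list_def by auto
    have c: "vCons a d \<in> carrier_vec (Suc (length vs))" using d by simp
    have e: "vec (length vs) (\<lambda>i. vCons a d $ Suc i) = d" using d by (intro eq_vecI) auto
    have "x = mat_of_cols n (v # vs) *\<^sub>v vCons a d"
      using mat_of_cols_Cons_mult[OF v vs c] e d by simp
    thus "x \<in> span_list n (v # vs)" unfolding span_list_def using c by auto
  qed
qed

lemma span_list_Nil: "span_list n [] = {0\<^sub>v n}"
proof -
  have "mat_of_cols n [] *\<^sub>v c = 0\<^sub>v n" if "c \<in> carrier_vec 0" for c
    using that by (intro eq_vecI) (auto simp: mat_of_cols_def scalar_prod_def)
  moreover have "(0\<^sub>v 0 :: complex vec) \<in> carrier_vec 0" by simp
  ultimately have "mat_of_cols n [] *\<^sub>v (0\<^sub>v 0 :: complex vec) = 0\<^sub>v n" by blast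
  thus ?thesis unfolding span_list_def using \<open>\<And>c. c \<in> carrier_vec 0 \<Longrightarrow> _\<close>
    by (auto intro!: exI[of _ "0\<^sub>v 0 :: complex vec"])
qed

lemma csubspace_extend: assumes S: "csubspace n S" and v: "v \<in> carrier_vec n"
  shows "csubspace n {a \<cdot>\<^sub>v v + u | a u. u \<in> S}"
  unfolding csubspace_def
proof (intro conjI ballI allI subsetI)
  note Sc = csubspace_carrier[OF S]
  fix x assume "x \<in> {a \<cdot>\<^sub>v v + u | a u. u \<in> S}"
  thus "x \<in> carrier_vec n" using Sc v by auto
next
  have "0\<^sub>v n = 0 \<cdot>\<^sub>v v + 0\<^sub>v n" using v by auto
  thus "0\<^sub>v n \<in> {a \<cdot>\<^sub>v v + u | a u. u \<in> S}" using csubspace_zero[OF S] by blast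
next
  note Sc = csubspace_carrier[OF S]
  fix x y assume x: "x \<in> {a \<cdot>\<^sub>v v + u | a u. u \<in> S}" and y: "y \<in> {a \<cdot>\<^sub>v v + u | a u. u \<in> S}"
  then obtain a u b u' where au: "u \<in> S" "x = a \<cdot>\<^sub>v v + u" and bu: "u' \<in> S" "y = b \<cdot>\<^sub>v v + u'" by blast
  have "x + y = (a + b) \<cdot>\<^sub>v v + (u + u')"
    using au bu Sc[of u] Sc[of u'] v by (intro eq_vecI) (auto simp: algebra_simps)
  thus "x + y \<in> {a \<cdot>\<^sub>v v + u | a u. u \<in> S}" using csubspace_add[OF S au(1) bu(1)] by blast
next
  note Sc = csubspace_carrier[OF S]
  fix c x assume x: "x \<in> {a \<cdot>\<^sub>v v + u | a u. u \<in> S}"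
  then obtain a u where au: "u \<in> S" "x = a \<cdot>\<^sub>v v + u" by blast
  have "c \<cdot>\<^sub>v x = (c * a) \<cdot>\<^sub>v v + c \<cdot>\<^sub>v u"
    using au Sc[of u] v by (intro eq_vecI) (auto simp: algebra_simps)
  thus "c \<cdot>\<^sub>v x \<in> {a \<cdot>\<^sub>v v + u | a u. u \<in> S}" using csubspace_smult[OF S au(1)] by blast
qed

lemma extend_by_orth_component:
  assumes S: "csubspace n S" and H: "has_orth_proj n S" and v: "v \<in> carrier_vec n"
  shows "{a \<cdot>\<^sub>v v + u | a u. u \<in> S} = {a \<cdot>\<^sub>v (v - orth_proj S v) + u | a u. u \<in> S}"
proof -
  have P: "orth_proj S v \<in> S" using orth_proj_char(1)[OF S H v] .
  have Pc: "orth_proj S v \<in> carrier_vec n" using csubspace_carrier[OF S P] .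
  have "a \<cdot>\<^sub>v v + u = a \<cdot>\<^sub>v (v - orth_proj S v) + (a \<cdot>\<^sub>v orth_proj S v + u)"
    "a \<cdot>\<^sub>v (v - orth_proj S v) + u = a \<cdot>\<^sub>v v + (u - a \<cdot>\<^sub>v orth_proj S v)"
    if "u \<in> carrier_vec n" for a u
    using that v Pc by (auto intro!: eq_vecI simp: algebra_simps)
  moreover have "a \<cdot>\<^sub>v orth_proj S v + u \<in> S" "u - a \<cdot>\<^sub>v orth_proj S v \<in> S" if "u \<in> S" for a u
    using csubspace_add[OF S csubspace_smult[OF S P] that] csubspace_diff[OF S that csubspace_smult[OF S P]] .
  ultimately show ?thesis using csubspace_carrier[OF S] by blast
qed

lemma has_orth_proj_extend_orthogonal:
  assumes S: "csubspace n S" and H: "has_orth_proj n S" and w: "w \<in> carrier_vec n"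
    and orth: "\<forall>u\<in>S. w \<bullet>c u = 0"
  shows "has_orth_proj n {a \<cdot>\<^sub>v w + u | a u. u \<in> S}"
  unfolding has_orth_proj_def
proof
  fix x :: "complex vec" assume x: "x \<in> carrier_vec n"
  note Px = orth_proj_char[OF S H x]
  have Pxc: "orth_proj S x \<in> carrier_vec n" using csubspace_carrier[OF S Px(1)] .
  have r: "x - orth_proj S x \<in> carrier_vec n" using x Pxc by simp
  define c where "c = (x \<bullet>c w) / (w \<bullet>c w)"
  have cc: "c * (w \<bullet>c w) = x \<bullet>c w"
    using cscalar_prod_self_eq_0_iff[OF w] x unfolding c_def by (cases "w \<bullet>c w = 0") auto
  have "orth_proj S x \<bullet>c w = 0" using orth Px(1) cnj_cscalar_prod[OF w Pxc] by force
  hence rw: "(x - orth_proj S x) \<bullet>c w = x \<bullet>c w" using cscalar_prod_diff_left[OF x Pxc w] by simp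
  show "\<exists>z\<in>{a \<cdot>\<^sub>v w + u | a u. u \<in> S}. \<forall>t\<in>{a \<cdot>\<^sub>v w + u | a u. u \<in> S}. (x - z) \<bullet>c t = 0"
  proof (intro bexI ballI)
    show "c \<cdot>\<^sub>v w + orth_proj S x \<in> {a \<cdot>\<^sub>v w + u | a u. u \<in> S}" using Px(1) by blast
    fix t assume "t \<in> {a \<cdot>\<^sub>v w + u | a u. u \<in> S}"
    then obtain a u where u: "u \<in> S" and t: "t = a \<cdot>\<^sub>v w + u" by blast
    have uc: "u \<in> carrier_vec n" using csubspace_carrier[OF S u] .
    have "x - (c \<cdot>\<^sub>v w + orth_proj S x) = (x - orth_proj S x) - c \<cdot>\<^sub>v w"
      using x w Pxc by (auto intro!: eq_vecI)
    hence "(x - (c \<cdot>\<^sub>v w + orth_proj S x)) \<bullet>c t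
        = cnj a * ((x - orth_proj S x) \<bullet>c w - c * (w \<bullet>c w)) + (x - orth_proj S x) \<bullet>c u - c * (w \<bullet>c u)"
      unfolding t using r w uc
      by (simp add: cscalar_prod_diff_left[of _ n] cscalar_prod_add_right[of _ n]
          cscalar_prod_smult_left[of _ n] cscalar_prod_smult_right[of _ n] algebra_simps)
    thus "(x - (c \<cdot>\<^sub>v w + orth_proj S x)) \<bullet>c t = 0" using Px(2) u orth rw cc by simp
  qed
qed

lemma has_orth_proj_extend:
  assumes S: "csubspace n S" and H: "has_orth_proj n S" and v: "v \<in> carrier_vec n"
  shows "has_orth_proj n {a \<cdot>\<^sub>v v + u | a u. u \<in> S}"
proof -
  have "v - orth_proj S v \<in> carrier_vec n" using orth_proj_carrier[OF S H v] v by simp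
  moreover have "\<forall>u\<in>S. (v - orth_proj S v) \<bullet>c u = 0" using orth_proj_char(2)[OF S H v] .
  ultimately show ?thesis
    unfolding extend_by_orth_component[OF S H v] by (rule has_orth_proj_extend_orthogonal[OF S H])
qed

lemma span_list_orth_projectable: "set ws \<subseteq> carrier_vec n \<Longrightarrow> csubspace n (span_list n ws) \<and> has_orth_proj n (span_list n ws)"
proof (induction ws)
  case Nil
  have "csubspace n {0\<^sub>v n}" unfolding csubspace_def by auto
  moreover have "has_orth_proj n {0\<^sub>v n}" unfolding has_orth_proj_def by auto
  ultimately show ?case by (simp add: span_list_Nil)
next
  case (Cons v vs)
  hence v: "v \<in> carrier_vec n" and vs: "set vs \<subseteq> carrier_vec n" by auto
  show ?case unfolding span_list_Cons[OF v vs] using csubspace_extend[OF _ v] has_orth_proj_extend[OF _ _ v] Cons.IH[OF vs] by blast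
qed

lemma mat_range_orth_projectable: assumes A: "A \<in> carrier_mat n k"
  shows "csubspace n (mat_range A)" "has_orth_proj n (mat_range A)"
proof -
  have "mat_range A = span_list n (cols A)"
    unfolding mat_range_def span_list_def using A mat_of_cols_cols[of A] by auto
  moreover have "set (cols A) \<subseteq> carrier_vec n" using A cols_dim[of A] by auto
  ultimately show "csubspace n (mat_range A)" "has_orth_proj n (mat_range A)" using span_list_orth_projectable by auto
qed

section \<open>Linear maps on subspaces: inverses, adjoints and operator norms\<close>

definition linear_on :: "complex vec set \<Rightarrow> nat \<Rightarrow> (complex vec \<Rightarrow> complex vec) \<Rightarrow> bool" where
  "linear_on S m f \<longleftrightarrow> (\<forall>x\<in>S. f x \<in> carrier_vec m) \<and> (\<forall>x\<in>S. \<forall>y\<in>S. f (x + y) = f x + f y)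
     \<and> (\<forall>c. \<forall>x\<in>S. f (c \<cdot>\<^sub>v x) = c \<cdot>\<^sub>v f x)"

lemma linear_onD: assumes "linear_on S m f"
  shows "x \<in> S \<Longrightarrow> f x \<in> carrier_vec m" "x \<in> S \<Longrightarrow> y \<in> S \<Longrightarrow> f (x + y) = f x + f y"
    "x \<in> S \<Longrightarrow> f (c \<cdot>\<^sub>v x) = c \<cdot>\<^sub>v f x"
  using assms unfolding linear_on_def by auto

lemma linear_on_zero: assumes S: "csubspace n S" and f: "linear_on S m f" shows "f (0\<^sub>v n) = 0\<^sub>v m"
proof -
  have "f (0\<^sub>v n) = f (0 \<cdot>\<^sub>v 0\<^sub>v n)" by (simp add: smult_zero_zero)
  also have "\<dots> = 0 \<cdot>\<^sub>v f (0\<^sub>v n)" using linear_onD(3)[OF f csubspace_zero[OF S]] .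
  also have "\<dots> = 0\<^sub>v m" using linear_onD(1)[OF f csubspace_zero[OF S]] by auto
  finally show ?thesis .
qed

lemma linear_on_diff: assumes S: "csubspace n S" and f: "linear_on S m f" and x: "x \<in> S" and y: "y \<in> S"
  shows "f (x - y) = f x - f y"
proof -
  have xc: "x \<in> carrier_vec n" "y \<in> carrier_vec n" using csubspace_carrier[OF S] x y by auto
  have "x - y = x + (-1) \<cdot>\<^sub>v y" using xc by auto
  hence "f (x - y) = f x + (-1) \<cdot>\<^sub>v f y"
    using linear_onD(2)[OF f x csubspace_smult[OF S y]] linear_onD(3)[OF f y] by simp
  also have "\<dots> = f x - f y" using linear_onD(1)[OF f x] linear_onD(1)[OF f y] by auto
  finally show ?thesis .
qed

lemma linear_on_comp: assumes "linear_on S m f" "\<And>x. x \<in> S \<Longrightarrow> f x \<in> T" "linear_on T k g"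
  shows "linear_on S k (\<lambda>x. g (f x))"
  using assms unfolding linear_on_def by auto

lemma linear_on_compression: assumes B: "B \<in> carrier_mat p q" and R: "csubspace p R" "has_orth_proj p R"
  and S: "S \<subseteq> carrier_vec q"
  shows "linear_on S p (compression B R)"
  unfolding linear_on_def compression_def
proof (intro conjI ballI allI)
  fix x assume "x \<in> S" hence x: "x \<in> carrier_vec q" using S by auto
  show "orth_proj R (B *\<^sub>v x) \<in> carrier_vec p" using orth_proj_carrier[OF R] B x by simp
next
  fix x y assume "x \<in> S" "y \<in> S" hence x: "x \<in> carrier_vec q" "y \<in> carrier_vec q" using S by auto
  show "orth_proj R (B *\<^sub>v (x + y)) = orth_proj R (B *\<^sub>v x) + orth_proj R (B *\<^sub>v y)"
    using orth_proj_add[OF R, of "B *\<^sub>v x" "B *\<^sub>v y"] B x by (simp add: mult_add_distrib_mat_vec[OF B])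
next
  fix c x assume "x \<in> S" hence x: "x \<in> carrier_vec q" using S by auto
  show "orth_proj R (B *\<^sub>v (c \<cdot>\<^sub>v x)) = c \<cdot>\<^sub>v orth_proj R (B *\<^sub>v x)"
    using orth_proj_smult[OF R, of "B *\<^sub>v x"] B x by (simp add: mult_mat_vec[OF B])
qed

lemma bij_betw_the_inv_into_facts: assumes bij: "bij_betw f S T"
  shows "\<And>y. y \<in> T \<Longrightarrow> the_inv_into S f y \<in> S"
    "\<And>y. y \<in> T \<Longrightarrow> f (the_inv_into S f y) = y"
    "\<And>x y. x \<in> S \<Longrightarrow> f x = y \<Longrightarrow> the_inv_into S f y = x"
  using bij unfolding bij_betw_def
  by (auto intro: the_inv_into_into f_the_inv_into_f the_inv_into_f_eq)

lemma linear_on_the_inv_into: assumes S: "csubspace n S" and T: "csubspace m T" and f: "linear_on S m f" and bij: "bij_betw f S T"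
  shows "linear_on T n (the_inv_into S f)"
  unfolding linear_on_def
proof (intro conjI ballI allI)
  note I = bij_betw_the_inv_into_facts[OF bij]
  fix y assume "y \<in> T" thus "the_inv_into S f y \<in> carrier_vec n" using I(1) csubspace_carrier[OF S] by blast
next
  note I = bij_betw_the_inv_into_facts[OF bij]
  fix y z assume y: "y \<in> T" and z: "z \<in> T"
  show "the_inv_into S f (y + z) = the_inv_into S f y + the_inv_into S f z"
    by (rule I(3)) (use csubspace_add[OF S I(1)[OF y] I(1)[OF z]] linear_onD(2)[OF f I(1)[OF y] I(1)[OF z]] I(2) y z in auto)
next
  note I = bij_betw_the_inv_into_facts[OF bij]
  fix c y assume y: "y \<in> T"
  show "the_inv_into S f (c \<cdot>\<^sub>v y) = c \<cdot>\<^sub>v the_inv_into S f y"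
    by (rule I(3)) (use csubspace_smult[OF S I(1)[OF y]] linear_onD(3)[OF f I(1)[OF y]] I(2) y in auto)
qed

lemma linear_functional_expansion:
  fixes G :: "complex vec \<Rightarrow> complex"
  assumes add: "\<And>x y. x \<in> carrier_vec n \<Longrightarrow> y \<in> carrier_vec n \<Longrightarrow> G (x + y) = G x + G y"
  and hom: "\<And>c x. x \<in> carrier_vec n \<Longrightarrow> G (c \<cdot>\<^sub>v x) = c * G x"
  and u: "u \<in> carrier_vec n"
  shows "G u = (\<Sum>i<n. u $ i * G (unit_vec n i))"
proof -
  define part where "part k = vec n (\<lambda>i. if i < k then u $ i else 0)" for k
  have pc: "part k \<in> carrier_vec n" for k unfolding part_def by simp
  have G0: "G (0\<^sub>v n) = 0"
    using hom[of "0\<^sub>v n" 0] smult_zero_zero[of n] by simp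
  have "k \<le> n \<Longrightarrow> G (part k) = (\<Sum>i<k. u $ i * G (unit_vec n i))" for k
  proof (induction k)
    case 0
    have "part 0 = 0\<^sub>v n" unfolding part_def by auto
    thus ?case using G0 by simp
  next
    case (Suc k)
    have "part (Suc k) = part k + u $ k \<cdot>\<^sub>v unit_vec n k"
      unfolding part_def using Suc.prems by (intro eq_vecI) (auto simp: unit_vec_def less_Suc_eq)
    hence "G (part (Suc k)) = G (part k) + u $ k * G (unit_vec n k)"
      using add[OF pc, of "u $ k \<cdot>\<^sub>v unit_vec n k"] hom[of "unit_vec n k"] by simp
    thus ?case using Suc by simp
  qed
  moreover have "part n = u" unfolding part_def using u by (intro eq_vecI) auto
  ultimately show ?thesis by force
qed

lemma riesz_representation: assumes S: "csubspace n S" and H: "has_orth_proj n S"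
  and add: "\<And>x y. x \<in> S \<Longrightarrow> y \<in> S \<Longrightarrow> g (x + y) = g x + g y"
  and hom: "\<And>c x. x \<in> S \<Longrightarrow> g (c \<cdot>\<^sub>v x) = c * g x"
  shows "\<exists>r\<in>S. \<forall>u\<in>S. g u = u \<bullet>c r"
proof -
  define G where "G u = g (orth_proj S u)" for u
  have Gadd: "G (x + y) = G x + G y" if "x \<in> carrier_vec n" "y \<in> carrier_vec n" for x y
    unfolding G_def using orth_proj_add[OF S H that] add orth_proj_char[OF S H] that by simp
  have Ghom: "G (c \<cdot>\<^sub>v x) = c * G x" if "x \<in> carrier_vec n" for c x
    unfolding G_def using orth_proj_smult[OF S H that] hom orth_proj_char[OF S H] that by simp
  define r0 where "r0 = vec n (\<lambda>i. cnj (G (unit_vec n i)))"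
  have r0: "r0 \<in> carrier_vec n" unfolding r0_def by simp
  have Gr: "G u = u \<bullet>c r0" if "u \<in> carrier_vec n" for u
    using linear_functional_expansion[of n G, OF Gadd Ghom that] that r0 by (simp add: cscalar_prod_sum[of _ n] r0_def)
  show ?thesis
  proof (intro bexI ballI)
    show "orth_proj S r0 \<in> S" using orth_proj_char[OF S H r0] by simp
    fix u assume u: "u \<in> S"
    have uc: "u \<in> carrier_vec n" using csubspace_carrier[OF S u] .
    have "g u = G u" unfolding G_def using orth_proj_id[OF S u] by simp
    also have "\<dots> = u \<bullet>c r0" using Gr[OF uc] .
    also have "\<dots> = u \<bullet>c orth_proj S r0" using cscalar_prod_orth_proj_right[OF S H r0 u] .
    finally show "g u = u \<bullet>c orth_proj S r0" .
  qed
qed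

lemma sub_adjoint_char: assumes S: "csubspace n S" and H: "has_orth_proj n S" and f: "linear_on S m f"
  and y: "y \<in> carrier_vec m"
  shows "sub_adjoint S T f y \<in> S" "\<forall>u\<in>S. f u \<bullet>c y = u \<bullet>c sub_adjoint S T f y"
proof -
  have "\<exists>r\<in>S. \<forall>u\<in>S. f u \<bullet>c y = u \<bullet>c r"
  proof (rule riesz_representation[OF S H])
    fix a b assume ab: "a \<in> S" "b \<in> S"
    have "f (a + b) = f a + f b" using linear_onD(2)[OF f ab] .
    thus "f (a + b) \<bullet>c y = f a \<bullet>c y + f b \<bullet>c y"
      using cscalar_prod_add_left[OF linear_onD(1)[OF f ab(1)] linear_onD(1)[OF f ab(2)] y] by simp
  next
    fix c a assume a: "a \<in> S"
    have "f (c \<cdot>\<^sub>v a) = c \<cdot>\<^sub>v f a" using linear_onD(3)[OF f a] .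
    thus "f (c \<cdot>\<^sub>v a) \<bullet>c y = c * (f a \<bullet>c y)"
      using cscalar_prod_smult_left[OF linear_onD(1)[OF f a] y] by simp
  qed
  then obtain r where r: "r \<in> S" "\<forall>u\<in>S. f u \<bullet>c y = u \<bullet>c r" by blast
  have "sub_adjoint S T f y = r" unfolding sub_adjoint_def
  proof (rule the_equality)
    show "r \<in> S \<and> (\<forall>u\<in>S. f u \<bullet>c y = u \<bullet>c r)" using r by blast
    fix r' assume "r' \<in> S \<and> (\<forall>u\<in>S. f u \<bullet>c y = u \<bullet>c r')"
    hence "r' \<in> S" "\<forall>u\<in>S. u \<bullet>c r' = u \<bullet>c r" using r by auto
    thus "r' = r" using csubspace_cscalar_prod_eqI[OF S, of r' r] r(1) by blast
  qed
  thus "sub_adjoint S T f y \<in> S" "\<forall>u\<in>S. f u \<bullet>c y = u \<bullet>c sub_adjoint S T f y" using r by auto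
qed

lemma sub_adjoint_eqI:
  assumes S: "csubspace n S" and H: "has_orth_proj n S" and f: "linear_on S m f"
    and y: "y \<in> carrier_vec m" and r: "r \<in> S" "\<forall>u\<in>S. f u \<bullet>c y = u \<bullet>c r"
  shows "sub_adjoint S T f y = r"
  using sub_adjoint_char[OF S H f y, of T] r csubspace_cscalar_prod_eqI[OF S] by metis

lemma linear_on_sub_adjoint:
  assumes S: "csubspace n S" and H: "has_orth_proj n S" and f: "linear_on S m f" and T: "csubspace m T"
  shows "linear_on T n (sub_adjoint S T f)"
  unfolding linear_on_def
proof (intro conjI ballI allI)
  note ch = sub_adjoint_char[OF S H f, of _ T] and Sc = csubspace_carrier[OF S]
    and Tc = csubspace_carrier[OF T]
  fix y assume "y \<in> T" thus "sub_adjoint S T f y \<in> carrier_vec n" using ch(1) Tc Sc by blast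
next
  note ch = sub_adjoint_char[OF S H f, of _ T] and Sc = csubspace_carrier[OF S]
    and Tc = csubspace_carrier[OF T]
  fix y z assume y: "y \<in> T" and z: "z \<in> T"
  show "sub_adjoint S T f (y + z) = sub_adjoint S T f y + sub_adjoint S T f z"
  proof (rule sub_adjoint_eqI[OF S H f])
    show "sub_adjoint S T f y + sub_adjoint S T f z \<in> S"
      using csubspace_add[OF S ch(1) ch(1)] Tc y z by blast
    show "\<forall>u\<in>S. f u \<bullet>c (y + z) = u \<bullet>c (sub_adjoint S T f y + sub_adjoint S T f z)"
      using ch Sc Tc y z linear_onD(1)[OF f]
      by (simp add: cscalar_prod_add_right[of _ m] cscalar_prod_add_right[of _ n])
  qed (use Tc y z in auto)
next
  note ch = sub_adjoint_char[OF S H f, of _ T] and Sc = csubspace_carrier[OF S]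
    and Tc = csubspace_carrier[OF T]
  fix c y assume y: "y \<in> T"
  show "sub_adjoint S T f (c \<cdot>\<^sub>v y) = c \<cdot>\<^sub>v sub_adjoint S T f y"
  proof (rule sub_adjoint_eqI[OF S H f])
    show "c \<cdot>\<^sub>v sub_adjoint S T f y \<in> S" using csubspace_smult[OF S ch(1)] Tc y by blast
    show "\<forall>u\<in>S. f u \<bullet>c (c \<cdot>\<^sub>v y) = u \<bullet>c (c \<cdot>\<^sub>v sub_adjoint S T f y)"
      using ch Sc Tc y linear_onD(1)[OF f]
      by (simp add: cscalar_prod_smult_right[of _ m] cscalar_prod_smult_right[of _ n])
  qed (use Tc y in auto)
qed

lemma linear_on_cscalar_prod_bound:
  assumes S: "csubspace n S" and H: "has_orth_proj n S" and f: "linear_on S m f"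
    and x: "x \<in> S" and y: "y \<in> carrier_vec m"
  shows "cmod (f x \<bullet>c y) \<le> (\<Sum>i<n. vnorm (f (orth_proj S (unit_vec n i)))) * vnorm x * vnorm y"
proof -
  have xc: "x \<in> carrier_vec n" using csubspace_carrier[OF S x] .
  define \<psi> where "\<psi> u = f (orth_proj S u) \<bullet>c y" for u
  have Pc: "\<And>u. u \<in> carrier_vec n \<Longrightarrow> orth_proj S u \<in> S" using orth_proj_char[OF S H] by blast
  have fPc: "\<And>u. u \<in> carrier_vec n \<Longrightarrow> f (orth_proj S u) \<in> carrier_vec m"
    using Pc linear_onD(1)[OF f] by blast
  have padd: "\<psi> (a + b) = \<psi> a + \<psi> b" if "a \<in> carrier_vec n" "b \<in> carrier_vec n" for a b
    unfolding \<psi>_def using orth_proj_add[OF S H that] linear_onD(2)[OF f Pc[OF that(1)] Pc[OF that(2)]]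
      cscalar_prod_add_left[OF fPc[OF that(1)] fPc[OF that(2)] y] by simp
  have phom: "\<psi> (c \<cdot>\<^sub>v a) = c * \<psi> a" if "a \<in> carrier_vec n" for c a
    unfolding \<psi>_def using orth_proj_smult[OF S H that] linear_onD(3)[OF f Pc[OF that]]
      cscalar_prod_smult_left[OF fPc[OF that] y] by simp
  have "f x \<bullet>c y = \<psi> x" unfolding \<psi>_def using orth_proj_id[OF S x] by simp
  also have "\<dots> = (\<Sum>i<n. x $ i * \<psi> (unit_vec n i))"
    using linear_functional_expansion[of n \<psi>, OF padd phom xc] .
  finally have "cmod (f x \<bullet>c y) \<le> (\<Sum>i<n. cmod (x $ i * \<psi> (unit_vec n i)))"
    using norm_sum by metis
  also have "\<dots> \<le> (\<Sum>i<n. vnorm x * (vnorm (f (orth_proj S (unit_vec n i))) * vnorm y))"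
  proof (rule sum_mono)
    fix i assume "i \<in> {..<n}"
    hence i: "i < n" by simp
    have "cmod (\<psi> (unit_vec n i)) \<le> vnorm (f (orth_proj S (unit_vec n i))) * vnorm y"
      unfolding \<psi>_def using cmod_cscalar_prod_le[OF fPc y] by simp
    moreover have "cmod (x $ i) \<le> vnorm x" using cmod_index_le_vnorm[OF xc i] .
    ultimately show "cmod (x $ i * \<psi> (unit_vec n i))
        \<le> vnorm x * (vnorm (f (orth_proj S (unit_vec n i))) * vnorm y)"
      by (simp add: norm_mult mult_mono vnorm_nonneg)
  qed
  also have "\<dots> = (\<Sum>i<n. vnorm (f (orth_proj S (unit_vec n i)))) * vnorm x * vnorm y"
    by (simp add: sum_distrib_left sum_distrib_right ac_simps)
  finally show ?thesis .
qed

lemma linear_on_bounded: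
  assumes S: "csubspace n S" and H: "has_orth_proj n S" and f: "linear_on S m f"
  obtains K where "0 \<le> K" "\<And>x. x \<in> S \<Longrightarrow> vnorm (f x) \<le> K * vnorm x"
proof
  define K where "K = (\<Sum>i<n. vnorm (f (orth_proj S (unit_vec n i))))"
  show K0: "0 \<le> K" unfolding K_def by (simp add: sum_nonneg vnorm_nonneg)
  fix x assume x: "x \<in> S"
  have fx: "f x \<in> carrier_vec m" using linear_onD(1)[OF f x] .
  have "(vnorm (f x))^2 \<le> vnorm (f x) * (K * vnorm x)"
    using linear_on_cscalar_prod_bound[OF S H f x fx, folded K_def]
    by (simp add: cscalar_prod_self_vnorm norm_power ac_simps)
  thus "vnorm (f x) \<le> K * vnorm x"
    using vnorm_nonneg[of "f x"] vnorm_nonneg[of x] K0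
    by (metis mult_nonneg_nonneg le_of_power2_le_mult)
qed

lemma opnorm_on_bound:
  assumes S: "csubspace n S" and H: "has_orth_proj n S" and f: "linear_on S m f"
  shows opnorm_on_nonneg: "0 \<le> opnorm_on S f"
    and vnorm_le_opnorm_on: "x \<in> S \<Longrightarrow> vnorm (f x) \<le> opnorm_on S f * vnorm x"
proof -
  obtain K where K0: "0 \<le> K" and bound: "\<And>x. x \<in> S \<Longrightarrow> vnorm (f x) \<le> K * vnorm x"
    using linear_on_bounded[OF S H f] by blast
  define T where "T = {vnorm (f x) | x. x \<in> S \<and> vnorm x \<le> 1}"
  have bdd: "bdd_above T" unfolding T_def
  proof (rule bdd_aboveI[of _ K])
    fix z assume "z \<in> {vnorm (f x) |x. x \<in> S \<and> vnorm x \<le> 1}"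
    then obtain x where x: "x \<in> S" "vnorm x \<le> 1" "z = vnorm (f x)" by blast
    have "K * vnorm x \<le> K" using K0 x(2) by (simp add: mult_left_le)
    thus "z \<le> K" using bound[OF x(1)] x(3) by linarith
  qed
  have zT: "0 \<in> T" unfolding T_def using csubspace_zero[OF S] linear_on_zero[OF S f] by force
  have eq: "opnorm_on S f = Sup T" unfolding opnorm_on_def T_def by simp
  show "0 \<le> opnorm_on S f" unfolding eq by (rule cSup_upper[OF zT bdd])
  assume x: "x \<in> S"
  have xc: "x \<in> carrier_vec n" using csubspace_carrier[OF S x] .
  show "vnorm (f x) \<le> opnorm_on S f * vnorm x"
  proof (cases "vnorm x = 0")
    case True
    hence "x = 0\<^sub>v n" using vnorm_eq_0_iff[OF xc] by simp
    thus ?thesis using linear_on_zero[OF S f] by simp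
  next
    case False
    hence pos: "vnorm x > 0" using vnorm_nonneg[of x] by simp
    define x' where "x' = (1 / of_real (vnorm x)) \<cdot>\<^sub>v x"
    have x'S: "x' \<in> S" unfolding x'_def using csubspace_smult[OF S x] .
    have "vnorm x' = 1" unfolding x'_def using vnorm_smult[OF xc] pos by (simp add: norm_divide)
    hence "vnorm (f x') \<in> T" unfolding T_def using x'S by auto
    hence le: "vnorm (f x') \<le> opnorm_on S f" unfolding eq by (rule cSup_upper[OF _ bdd])
    have "f x' = (1 / of_real (vnorm x)) \<cdot>\<^sub>v f x" unfolding x'_def using linear_onD(3)[OF f x] .
    hence "vnorm (f x') = vnorm (f x) / vnorm x"
      using vnorm_smult[OF linear_onD(1)[OF f x]] pos by (simp add: norm_divide)
    thus ?thesis using le pos by (simp add: divide_le_eq)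
  qed
qed

lemma cmod_cscalar_prod_opnorm_on_le:
  assumes S: "csubspace n S" and H: "has_orth_proj n S" and f: "linear_on S m f"
    and x: "x \<in> S" and u: "u \<in> carrier_vec m"
  shows "cmod (u \<bullet>c f x) \<le> opnorm_on S f * vnorm u * vnorm x"
    and "cmod (f x \<bullet>c u) \<le> opnorm_on S f * vnorm u * vnorm x"
proof -
  have fx: "f x \<in> carrier_vec m" using linear_onD(1)[OF f x] .
  have "cmod (u \<bullet>c f x) \<le> vnorm u * vnorm (f x)" using cmod_cscalar_prod_le[OF u fx] .
  also have "\<dots> \<le> vnorm u * (opnorm_on S f * vnorm x)"
    using vnorm_le_opnorm_on[OF S H f x] by (simp add: mult_left_mono vnorm_nonneg)
  finally show "cmod (u \<bullet>c f x) \<le> opnorm_on S f * vnorm u * vnorm x" by (simp add: ac_simps)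
  moreover have "cmod (f x \<bullet>c u) = cmod (u \<bullet>c f x)"
    using cnj_cscalar_prod[OF fx u] complex_mod_cnj by metis
  ultimately show "cmod (f x \<bullet>c u) \<le> opnorm_on S f * vnorm u * vnorm x" by simp
qed

section \<open>Range and kernel of Hermitian and positive semidefinite matrices\<close>

lemma mult_mat_vec_zero: "A \<in> carrier_mat m n \<Longrightarrow> A *\<^sub>v 0\<^sub>v n = (0\<^sub>v m :: complex vec)"
  by (intro eq_vecI) auto

lemma csubspace_mat_kernel: assumes A: "(A::complex mat) \<in> carrier_mat m n" shows "csubspace n (mat_kernel A)"
  unfolding csubspace_def
proof (intro conjI ballI allI subsetI)
  fix x assume "x \<in> mat_kernel A" thus "x \<in> carrier_vec n" using mat_kernelD(1)[OF A] by blast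
next
  show "0\<^sub>v n \<in> mat_kernel A" using A by (intro mat_kernelI[OF A]) auto
next
  fix x y assume x: "x \<in> mat_kernel A" and y: "y \<in> mat_kernel A"
  show "x + y \<in> mat_kernel A" using mat_kernelD[OF A x] mat_kernelD[OF A y] A
    by (intro mat_kernelI[OF A]) (auto simp: mult_add_distrib_mat_vec[OF A])
next
  fix c x assume x: "x \<in> mat_kernel A"
  show "c \<cdot>\<^sub>v x \<in> mat_kernel A" using mat_kernelD[OF A x] A
    by (intro mat_kernelI[OF A]) (auto simp: mult_mat_vec[OF A])
qed

lemma hermitian_range_orth_kernel: assumes H: "hermitian_mat A" and A: "A \<in> carrier_mat n n"
  and z: "z \<in> mat_range A" and y: "y \<in> mat_kernel A"
  shows "z \<bullet>c y = 0"
proof -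
  obtain w where w: "w \<in> carrier_vec n" "z = A *\<^sub>v w" using z A unfolding mat_range_def by auto
  have yc: "y \<in> carrier_vec n" and Ay: "A *\<^sub>v y = 0\<^sub>v n" using mat_kernelD[OF A y] by auto
  show ?thesis using hermitian_cscalar_prod[OF H A w(1) yc] Ay w by simp
qed

lemma mult_mat_vec_in_mat_range: "A \<in> carrier_mat n n \<Longrightarrow> x \<in> carrier_vec n \<Longrightarrow> A *\<^sub>v x \<in> mat_range A"
  unfolding mat_range_def by auto

lemma hermitian_diff_orth_proj_range: assumes H: "hermitian_mat A" and A: "A \<in> carrier_mat n n" and x: "x \<in> carrier_vec n"
  shows "x - orth_proj (mat_range A) x \<in> mat_kernel A"
proof -
  note RS = mat_range_orth_projectable[OF A]
  define w where "w = orth_proj (mat_range A) x"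
  have w: "w \<in> mat_range A" "\<forall>u\<in>mat_range A. (x - w) \<bullet>c u = 0" using orth_proj_char[OF RS x] w_def by auto
  have wc: "w \<in> carrier_vec n" using csubspace_carrier[OF RS(1) w(1)] .
  have d: "x - w \<in> carrier_vec n" using x wc by simp
  define k where "k = A *\<^sub>v (x - w)"
  have kc: "k \<in> carrier_vec n" unfolding k_def using A d by simp
  have "k \<bullet>c k = (x - w) \<bullet>c (A *\<^sub>v k)" unfolding k_def using hermitian_cscalar_prod[OF H A d] kc by (simp add: k_def)
  also have "\<dots> = 0" using w(2) mult_mat_vec_in_mat_range[OF A kc] by blast
  finally have "k = 0\<^sub>v n" using cscalar_prod_self_eq_0_iff[OF kc] by simp
  thus ?thesis unfolding w_def[symmetric] k_def using mat_kernelI[OF A d] by simp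
qed

lemma has_orth_proj_mat_kernel: assumes H: "hermitian_mat A" and A: "A \<in> carrier_mat n n"
  shows "has_orth_proj n (mat_kernel A)"
  unfolding has_orth_proj_def
proof
  fix x :: "complex vec" assume x: "x \<in> carrier_vec n"
  note RS = mat_range_orth_projectable[OF A]
  define w where "w = orth_proj (mat_range A) x"
  have w: "w \<in> mat_range A" using orth_proj_char[OF RS x] w_def by auto
  have wc: "w \<in> carrier_vec n" using csubspace_carrier[OF RS(1) w] .
  have "x - (x - w) = w" using x wc by auto
  moreover have "x - w \<in> mat_kernel A" using hermitian_diff_orth_proj_range[OF H A x] w_def by simp
  ultimately show "\<exists>w\<in>mat_kernel A. \<forall>u\<in>mat_kernel A. (x - w) \<bullet>c u = 0"
    using hermitian_range_orth_kernel[OF H A w] by metis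
qed

lemma hermitian_orth_proj_kernel: assumes H: "hermitian_mat A" and A: "A \<in> carrier_mat n n" and x: "x \<in> carrier_vec n"
  shows "orth_proj (mat_kernel A) x = x - orth_proj (mat_range A) x"
proof (rule orth_proj_eqI[OF csubspace_mat_kernel[OF A] x])
  note RS = mat_range_orth_projectable[OF A]
  define w where "w = orth_proj (mat_range A) x"
  have w: "w \<in> mat_range A" using orth_proj_char[OF RS x] w_def by auto
  have wc: "w \<in> carrier_vec n" using csubspace_carrier[OF RS(1) w] .
  show "x - orth_proj (mat_range A) x \<in> mat_kernel A" using hermitian_diff_orth_proj_range[OF H A x] .
  have "x - (x - w) = w" using x wc by auto
  thus "\<forall>u\<in>mat_kernel A. (x - (x - orth_proj (mat_range A) x)) \<bullet>c u = 0"
    using hermitian_range_orth_kernel[OF H A w] w_def by simp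
qed

lemma hermitian_range_kernel_zero: assumes H: "hermitian_mat A" and A: "A \<in> carrier_mat n n"
  and z: "z \<in> mat_range A" "z \<in> mat_kernel A" shows "z = 0\<^sub>v n"
  using hermitian_range_orth_kernel[OF H A z] cscalar_prod_self_eq_0_iff[of z n] mat_kernelD(1)[OF A z(2)] by simp

lemma hermitian_inj_on_mat_range: assumes H: "hermitian_mat A" and A: "A \<in> carrier_mat n n"
  shows "inj_on (\<lambda>x. A *\<^sub>v x) (mat_range A)"
proof (rule inj_onI)
  fix x y assume x: "x \<in> mat_range A" and y: "y \<in> mat_range A" and e: "A *\<^sub>v x = A *\<^sub>v y"
  note RS = mat_range_orth_projectable[OF A]
  have c: "x \<in> carrier_vec n" "y \<in> carrier_vec n" using csubspace_carrier[OF RS(1)] x y by auto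
  have d: "x - y \<in> mat_range A" using csubspace_diff[OF RS(1) x y] .
  have "A *\<^sub>v (x - y) = 0\<^sub>v n" using e c A by (simp add: mult_minus_distrib_mat_vec[OF A])
  hence "x - y \<in> mat_kernel A" using mat_kernelI[OF A] c by simp
  hence "x - y = 0\<^sub>v n" using hermitian_range_kernel_zero[OF H A d] by simp
  thus "x = y" using vec_eq_of_diff_eq_0[OF c] by simp
qed

lemma hermitian_image_mat_range: assumes H: "hermitian_mat A" and A: "A \<in> carrier_mat n n"
  shows "(\<lambda>x. A *\<^sub>v x) ` mat_range A = mat_range A"
proof
  show "(\<lambda>x. A *\<^sub>v x) ` mat_range A \<subseteq> mat_range A"
    using mult_mat_vec_in_mat_range[OF A] csubspace_carrier[OF mat_range_orth_projectable(1)[OF A]] by auto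
  show "mat_range A \<subseteq> (\<lambda>x. A *\<^sub>v x) ` mat_range A"
  proof
    fix y assume "y \<in> mat_range A"
    then obtain z where z: "z \<in> carrier_vec n" "y = A *\<^sub>v z" using A unfolding mat_range_def by auto
    note RS = mat_range_orth_projectable[OF A]
    define w where "w = orth_proj (mat_range A) z"
    have w: "w \<in> mat_range A" using orth_proj_char[OF RS z(1)] w_def by auto
    have wc: "w \<in> carrier_vec n" using csubspace_carrier[OF RS(1) w] .
    have "A *\<^sub>v (z - w) = 0\<^sub>v n" using mat_kernelD(2)[OF A hermitian_diff_orth_proj_range[OF H A z(1)]] w_def by simp
    hence "A *\<^sub>v z - A *\<^sub>v w = 0\<^sub>v n" using z A wc by (simp add: mult_minus_distrib_mat_vec[OF A])
    hence "A *\<^sub>v z = A *\<^sub>v w" using vec_eq_of_diff_eq_0[of "A *\<^sub>v z" n "A *\<^sub>v w"] A z wc by simp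
    hence "A *\<^sub>v w = y" using z by simp
    thus "y \<in> (\<lambda>x. A *\<^sub>v x) ` mat_range A" using w by blast
  qed
qed

lemma hermitian_inv_mat_range: assumes H: "hermitian_mat A" and A: "A \<in> carrier_mat n n" and y: "y \<in> mat_range A"
  shows "the_inv_into (mat_range A) (\<lambda>x. A *\<^sub>v x) y \<in> mat_range A"
    "A *\<^sub>v the_inv_into (mat_range A) (\<lambda>x. A *\<^sub>v x) y = y"
  using the_inv_into_into[OF hermitian_inj_on_mat_range[OF H A], of y] f_the_inv_into_f[OF hermitian_inj_on_mat_range[OF H A], of y]
    hermitian_image_mat_range[OF H A] y by auto

lemma hermitian_inv_mat_range_eqI: assumes H: "hermitian_mat A" and A: "A \<in> carrier_mat n n"
  and w: "w \<in> mat_range A" and e: "A *\<^sub>v w = y"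
  shows "the_inv_into (mat_range A) (\<lambda>x. A *\<^sub>v x) y = w"
  using the_inv_into_f_eq[OF hermitian_inj_on_mat_range[OF H A] e w] by simp

lemma linear_on_hermitian_inv_mat_range: assumes H: "hermitian_mat A" and A: "A \<in> carrier_mat n n"
  shows "linear_on (mat_range A) n (the_inv_into (mat_range A) (\<lambda>x. A *\<^sub>v x))"
  unfolding linear_on_def
proof (intro conjI ballI allI)
  note RS = mat_range_orth_projectable[OF A]
  let ?I = "the_inv_into (mat_range A) (\<lambda>x. A *\<^sub>v x)"
  fix x assume x: "x \<in> mat_range A"
  show "?I x \<in> carrier_vec n" using csubspace_carrier[OF RS(1) hermitian_inv_mat_range(1)[OF H A x]] .
next
  note RS = mat_range_orth_projectable[OF A]
  let ?I = "the_inv_into (mat_range A) (\<lambda>x. A *\<^sub>v x)"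
  fix x y assume x: "x \<in> mat_range A" and y: "y \<in> mat_range A"
  note ix = hermitian_inv_mat_range[OF H A x] and iy = hermitian_inv_mat_range[OF H A y]
  have c: "?I x \<in> carrier_vec n" "?I y \<in> carrier_vec n" using csubspace_carrier[OF RS(1)] ix iy by auto
  show "?I (x + y) = ?I x + ?I y"
    by (rule hermitian_inv_mat_range_eqI[OF H A csubspace_add[OF RS(1) ix(1) iy(1)]])
      (use c ix iy in \<open>simp add: mult_add_distrib_mat_vec[OF A]\<close>)
next
  note RS = mat_range_orth_projectable[OF A]
  let ?I = "the_inv_into (mat_range A) (\<lambda>x. A *\<^sub>v x)"
  fix c x assume x: "x \<in> mat_range A"
  note ix = hermitian_inv_mat_range[OF H A x]
  have cx: "?I x \<in> carrier_vec n" using csubspace_carrier[OF RS(1)] ix by auto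
  show "?I (c \<cdot>\<^sub>v x) = c \<cdot>\<^sub>v ?I x"
    by (rule hermitian_inv_mat_range_eqI[OF H A csubspace_smult[OF RS(1) ix(1)]])
      (use cx ix in \<open>simp add: mult_mat_vec[OF A]\<close>)
qed

lemma psd_mat_hermitian: "psd_mat A \<Longrightarrow> hermitian_mat A" unfolding psd_mat_def by simp

lemma psd_mat_Re_nonneg: assumes P: "psd_mat A" and A: "A \<in> carrier_mat n n" and x: "x \<in> carrier_vec n"
  shows "0 \<le> Re ((A *\<^sub>v x) \<bullet>c x)"
  using P A x unfolding psd_mat_def by (auto simp: less_eq_complex_def)

lemma psd_mat_shifted_form_nonneg:
  assumes P: "psd_mat A" and A: "A \<in> carrier_mat n n"
    and x: "x \<in> carrier_vec n" and w: "w \<in> carrier_vec n" and Aw: "A *\<^sub>v w = x"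
  shows "0 \<le> Re ((A *\<^sub>v x) \<bullet>c x) - 2 * s * (vnorm x)^2 + s * s * Re (x \<bullet>c w)"
proof -
  define z where "z = x - of_real s \<cdot>\<^sub>v w"
  have zc: "z \<in> carrier_vec n" unfolding z_def using x w by simp
  have Axc: "A *\<^sub>v x \<in> carrier_vec n" using A x by simp
  have sxc: "of_real s \<cdot>\<^sub>v x \<in> carrier_vec n" "of_real s \<cdot>\<^sub>v w \<in> carrier_vec n" using x w by auto
  have Az: "A *\<^sub>v z = A *\<^sub>v x - of_real s \<cdot>\<^sub>v x"
    unfolding z_def using A x w Aw by (simp add: mult_minus_distrib_mat_vec[OF A] mult_mat_vec[OF A])
  have Axw: "(A *\<^sub>v x) \<bullet>c w = x \<bullet>c x"
    using hermitian_cscalar_prod[OF psd_mat_hermitian[OF P] A x w] Aw by simp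
  have "(A *\<^sub>v z) \<bullet>c z = (A *\<^sub>v x - of_real s \<cdot>\<^sub>v x) \<bullet>c (x - of_real s \<cdot>\<^sub>v w)"
    using Az z_def by simp
  also have "\<dots> = (A *\<^sub>v x) \<bullet>c x - of_real s * ((A *\<^sub>v x) \<bullet>c w)
      - of_real s * (x \<bullet>c x) + of_real s * of_real s * (x \<bullet>c w)"
    using cscalar_prod_diff_left[OF Axc sxc(1) zc[unfolded z_def]] cscalar_prod_diff_right[OF Axc x sxc(2)]
      cscalar_prod_diff_right[OF sxc(1) x sxc(2)] cscalar_prod_smult_left[OF x x]
      cscalar_prod_smult_left[OF x sxc(2)] cscalar_prod_smult_right[OF Axc w] cscalar_prod_smult_right[OF x w]
    by (simp add: algebra_simps)
  finally have "Re ((A *\<^sub>v z) \<bullet>c z) = Re ((A *\<^sub>v x) \<bullet>c x) - 2 * s * (vnorm x)^2 + s * s * Re (x \<bullet>c w)"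
    using Axw by (simp add: cscalar_prod_self_vnorm)
  thus ?thesis using psd_mat_Re_nonneg[OF P A zc] by simp
qed

text \<open>The quadratic form of a positive semidefinite \<open>A\<close> is bounded below on its range by
  \<open>\<parallel>x\<parallel>\<^sup>2 / \<parallel>A\<^sub>1\<^sup>-\<^sup>1\<parallel>\<close>: take \<open>s = 1 / \<parallel>A\<^sub>1\<^sup>-\<^sup>1\<parallel>\<close> and \<open>w = A\<^sub>1\<^sup>-\<^sup>1 x\<close> above.\<close>
lemma psd_mat_range_lower_bound:
  assumes P: "psd_mat A" and A: "A \<in> carrier_mat n n" and x: "x \<in> mat_range A"
  shows "(vnorm x)^2 \<le> opnorm_on (mat_range A) (the_inv_into (mat_range A) (\<lambda>x. A *\<^sub>v x)) * Re ((A *\<^sub>v x) \<bullet>c x)"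
proof -
  have H: "hermitian_mat A" using psd_mat_hermitian[OF P] .
  note RS = mat_range_orth_projectable[OF A]
  define a where "a = opnorm_on (mat_range A) (the_inv_into (mat_range A) (\<lambda>x. A *\<^sub>v x))"
  define w where "w = the_inv_into (mat_range A) (\<lambda>x. A *\<^sub>v x) x"
  have w: "w \<in> mat_range A" "A *\<^sub>v w = x" using hermitian_inv_mat_range[OF H A x] w_def by auto
  have wc: "w \<in> carrier_vec n" using csubspace_carrier[OF RS(1) w(1)] .
  have xc: "x \<in> carrier_vec n" using csubspace_carrier[OF RS(1) x] .
  note ob = opnorm_on_bound[OF RS linear_on_hermitian_inv_mat_range[OF H A]]
  have a0: "0 \<le> a" using ob(1) a_def by simp
  have wb: "vnorm w \<le> a * vnorm x" using ob(2)[OF x] a_def w_def by simp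
  have \<gamma>: "Re (x \<bullet>c w) \<le> a * (vnorm x)^2"
  proof -
    have "Re (x \<bullet>c w) \<le> cmod (x \<bullet>c w)" by (rule complex_Re_le_cmod)
    also have "\<dots> \<le> vnorm x * vnorm w" by (rule cmod_cscalar_prod_le[OF xc wc])
    also have "\<dots> \<le> vnorm x * (a * vnorm x)" by (rule mult_left_mono[OF wb vnorm_nonneg])
    finally show ?thesis by (simp add: power2_eq_square ac_simps)
  qed
  show ?thesis
  proof (cases "a = 0")
    case True
    hence "w = 0\<^sub>v n" using wb vnorm_nonneg[of w] vnorm_eq_0_iff[OF wc] by simp
    hence "x = 0\<^sub>v n" using w(2) mult_mat_vec_zero[OF A] by simp
    thus ?thesis using mult_mat_vec_zero[OF A] by simp
  next
    case False
    hence apos: "a > 0" using a0 by simp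
    have "(1 / a) * (1 / a) * Re (x \<bullet>c w) \<le> (1 / a) * (1 / a) * (a * (vnorm x)^2)"
      by (rule mult_left_mono[OF \<gamma>]) simp
    also have "\<dots> = (1 / a) * (vnorm x)^2" using apos by (simp add: field_simps power2_eq_square)
    finally have "0 \<le> Re ((A *\<^sub>v x) \<bullet>c x) - (1 / a) * (vnorm x)^2"
      using psd_mat_shifted_form_nonneg[OF P A xc wc w(2), of "1 / a"] by simp
    thus ?thesis unfolding a_def[symmetric] using apos by (simp add: divide_le_eq ac_simps)
  qed
qed

lemma mult_add_mult_le_sqrt_sum_squares:
  fixes a1 a2 b1 b2 :: real
  shows "a1 * a2 + b1 * b2 \<le> sqrt (a1^2 + b1^2) * sqrt (a2^2 + b2^2)"
proof -
  have "(a1^2 + b1^2) * (a2^2 + b2^2) - (a1 * a2 + b1 * b2)^2 = (a1 * b2 - a2 * b1)^2"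
    by (simp add: power2_eq_square algebra_simps)
  hence "(a1 * a2 + b1 * b2)^2 \<le> (a1^2 + b1^2) * (a2^2 + b2^2)"
    using zero_le_power2[of "a1 * b2 - a2 * b1"] by linarith
  hence "a1 * a2 + b1 * b2 \<le> sqrt ((a1^2 + b1^2) * (a2^2 + b2^2))"
    by (rule real_le_rsqrt)
  thus ?thesis by (simp add: real_sqrt_mult)
qed

lemma small_coupling_ineqs: fixes u n :: real assumes u0: "0 \<le> u" and n0: "0 \<le> n" and h: "u * (1 + n)^2 < 1"
  shows "u * n^2 < (1 - u)^2" and "u < 1"
proof -
  define s where "s = sqrt u"
  have s0: "0 \<le> s" unfolding s_def using u0 by simp
  have us: "u = s^2" unfolding s_def using u0 by simp
  have "(s * (1 + n))^2 < 1" using h us by (simp add: power_mult_distrib)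
  hence sl: "s * (1 + n) < 1" using s0 n0 by (smt (verit) one_power2 power_mono)
  have "s * n \<ge> 0" using s0 n0 by simp
  hence s1: "s < 1" using sl by (simp add: algebra_simps)
  have "n * s < 1 - s" using sl by (simp add: algebra_simps)
  hence "1 - u - n * s > s * (1 - s)" using us by (simp add: power2_eq_square algebra_simps)
  moreover have "s * (1 - s) \<ge> 0" using s0 s1 by simp
  ultimately have gt: "1 - u > n * s" by simp
  have "n * s \<ge> 0" using n0 s0 by simp
  hence "(n * s)^2 < (1 - u)^2" using gt by (simp add: power_strict_mono)
  thus "u * n^2 < (1 - u)^2" using us by (simp add: power_mult_distrib mult.commute)
  show "u < 1" using s1 us s0 by (simp add: power_less_one_iff)
qed

text \<open>With \<open>r1 = \<parallel>(a1, b1)\<parallel>\<close> and \<open>r2 = \<parallel>(a2, b2)\<parallel>\<close>, the last two hypotheses give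
  \<open>r2 (1 - u) \<le> n r1\<close> and the first one \<open>r1 (1 - u) \<le> u n r2\<close>, so \<open>(1 - u)\<^sup>2 \<le> u n\<^sup>2\<close> unless \<open>r1 = 0\<close>.\<close>
lemma small_coupling_forces_zero:
  fixes a1 a2 b1 b2 u n :: real
  assumes nn: "0 \<le> a1" "0 \<le> a2" "0 \<le> b1" "0 \<le> b2" "0 \<le> u" "0 \<le> n"
  and h: "u * (1 + n)^2 < 1"
  and e1: "a1^2 + b1^2 \<le> u * (a1^2 + b1^2 + n * (a1 * a2 + b1 * b2))"
  and e2: "a2 \<le> u * b2 + n * a1" and e3: "b2 \<le> u * a2 + n * b1"
  shows "a1 = 0 \<and> a2 = 0 \<and> b1 = 0 \<and> b2 = 0"
proof -
  note ki = small_coupling_ineqs[OF nn(5,6) h]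
  define r1 where "r1 = sqrt (a1^2 + b1^2)"
  define r2 where "r2 = sqrt (a2^2 + b2^2)"
  have r10: "0 \<le> r1" and r20: "0 \<le> r2" unfolding r1_def r2_def by auto
  have r1sq: "r1^2 = a1^2 + b1^2" unfolding r1_def by simp
  have r2sq: "r2^2 = a2^2 + b2^2" unfolding r2_def by simp
  have "r2 \<le> sqrt ((u * b2 + n * a1)^2 + (u * a2 + n * b1)^2)"
    unfolding r2_def using nn e2 e3 by (intro real_sqrt_le_mono add_mono power_mono) auto
  also have "\<dots> \<le> sqrt ((u * b2)^2 + (u * a2)^2) + sqrt ((n * a1)^2 + (n * b1)^2)"
    by (rule real_sqrt_sum_squares_triangle_ineq)
  also have "sqrt ((u * b2)^2 + (u * a2)^2) = u * r2"
    unfolding r2_def using nn by (simp add: power_mult_distrib distrib_left[symmetric] add.commute real_sqrt_mult)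
  also have "sqrt ((n * a1)^2 + (n * b1)^2) = n * r1"
    unfolding r1_def using nn by (simp add: power_mult_distrib distrib_left[symmetric] real_sqrt_mult)
  finally have r2le: "r2 * (1 - u) \<le> n * r1" by (simp add: algebra_simps)
  have cs: "a1 * a2 + b1 * b2 \<le> r1 * r2"
    unfolding r1_def r2_def by (rule mult_add_mult_le_sqrt_sum_squares)
  have e1': "r1^2 \<le> u * (r1^2 + n * (r1 * r2))"
  proof -
    have "u * (n * (a1 * a2 + b1 * b2)) \<le> u * (n * (r1 * r2))"
      using cs nn by (simp add: mult_left_mono)
    thus ?thesis using e1 r1sq by (simp add: distrib_left)
  qed
  have r1z: "r1 = 0"
  proof (rule ccontr)
    assume "r1 \<noteq> 0"
    hence r1p: "r1 > 0" using r10 by simp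
    have om: "1 - u > 0" using ki(2) by simp
    have "r1 * r1 \<le> r1 * (u * (r1 + n * r2))" using e1' by (simp add: power2_eq_square algebra_simps)
    hence "r1 \<le> u * (r1 + n * r2)" using r1p by (simp add: mult_le_cancel_left_pos)
    hence "r1 * (1 - u) \<le> u * n * r2" by (simp add: algebra_simps)
    hence "r1 * (1 - u) * (1 - u) \<le> u * n * r2 * (1 - u)" using om by (rule mult_right_mono[OF _ less_imp_le])
    also have "\<dots> = u * n * (r2 * (1 - u))" by simp
    also have "\<dots> \<le> u * n * (n * r1)" using r2le nn by (simp add: mult_left_mono)
    finally have "r1 * (1 - u)^2 \<le> r1 * (u * n^2)" by (simp add: power2_eq_square ac_simps)
    hence "(1 - u)^2 \<le> u * n^2" using r1p by simp
    thus False using ki(1) by simp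
  qed
  hence "a1 = 0" "b1 = 0" using r1sq nn by (auto simp: add_nonneg_eq_0_iff)
  have "r2 * (1 - u) \<le> 0" using r2le r1z by simp
  hence "r2 = 0" using r20 ki(2) by (simp add: mult_le_0_iff)
  hence "a2 = 0" "b2 = 0" using r2sq nn by (auto simp: add_nonneg_eq_0_iff)
  thus ?thesis using \<open>a1 = 0\<close> \<open>b1 = 0\<close> by simp
qed

section \<open>The saddle point matrix\<close>

lemma four_block_mat_eigenvector:
  assumes A: "A \<in> carrier_mat p p" and B: "B \<in> carrier_mat p q"
    and D: "D \<in> carrier_mat q p" and E: "E \<in> carrier_mat q q"
    and ev: "eigenvector (four_block_mat A B D E) v lam"
  obtains x y where "x \<in> carrier_vec p" "y \<in> carrier_vec q" "v = x @\<^sub>v y" "v \<noteq> 0\<^sub>v (p + q)"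
    "A *\<^sub>v x + B *\<^sub>v y = lam \<cdot>\<^sub>v x" "D *\<^sub>v x + E *\<^sub>v y = lam \<cdot>\<^sub>v y"
proof
  have H: "four_block_mat A B D E \<in> carrier_mat (p + q) (p + q)" using A E by simp
  have v: "v \<in> carrier_vec (p + q)" "v \<noteq> 0\<^sub>v (p + q)" "four_block_mat A B D E *\<^sub>v v = lam \<cdot>\<^sub>v v"
    using ev H unfolding eigenvector_def by auto
  define x where "x = vec_first v p"
  define y where "y = vec_last v q"
  show x: "x \<in> carrier_vec p" and y: "y \<in> carrier_vec q" unfolding x_def y_def by auto
  show vxy: "v = x @\<^sub>v y" unfolding x_def y_def using v(1) by simp
  show "v \<noteq> 0\<^sub>v (p + q)" using v(2) .
  have "(A *\<^sub>v x + B *\<^sub>v y) @\<^sub>v (D *\<^sub>v x + E *\<^sub>v y) = (lam \<cdot>\<^sub>v x) @\<^sub>v (lam \<cdot>\<^sub>v y)"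
    using v(3) four_block_mat_mult_vec[OF A B D E x y] smult_append_vec[OF x y] vxy by simp
  thus "A *\<^sub>v x + B *\<^sub>v y = lam \<cdot>\<^sub>v x" "D *\<^sub>v x + E *\<^sub>v y = lam \<cdot>\<^sub>v y"
    using append_vec_eq[of "A *\<^sub>v x + B *\<^sub>v y" p "lam \<cdot>\<^sub>v x"] A B x y by auto
qed

lemma saddle_point_mat_eigenvector:
  assumes A: "A \<in> carrier_mat p p" and B: "B \<in> carrier_mat p q" and C: "C \<in> carrier_mat q q"
    and ev: "eigenvector (four_block_mat A B (mat_adjoint B) (- C)) v lam"
  obtains x y where "x \<in> carrier_vec p" "y \<in> carrier_vec q" "v = x @\<^sub>v y" "v \<noteq> 0\<^sub>v (p + q)"
    "A *\<^sub>v x + B *\<^sub>v y = lam \<cdot>\<^sub>v x" "mat_adjoint B *\<^sub>v x = lam \<cdot>\<^sub>v y + C *\<^sub>v y"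
proof -
  have Bt: "mat_adjoint B \<in> carrier_mat q p" using mat_adjoint_carrier[OF B] .
  obtain x y where xy: "x \<in> carrier_vec p" "y \<in> carrier_vec q" "v = x @\<^sub>v y" "v \<noteq> 0\<^sub>v (p + q)"
      "A *\<^sub>v x + B *\<^sub>v y = lam \<cdot>\<^sub>v x" and row: "mat_adjoint B *\<^sub>v x + (- C) *\<^sub>v y = lam \<cdot>\<^sub>v y"
    using four_block_mat_eigenvector[OF A B Bt uminus_carrier_mat[OF C] ev] by blast
  have "mat_adjoint B *\<^sub>v x = lam \<cdot>\<^sub>v y + C *\<^sub>v y"
  proof (rule eq_vecI)
    fix i assume "i < dim_vec (lam \<cdot>\<^sub>v y + C *\<^sub>v y)"
    hence i: "i < q" using C by simp
    have "(mat_adjoint B *\<^sub>v x + (- C) *\<^sub>v y) $ i = (lam \<cdot>\<^sub>v y) $ i" using row by simp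
    thus "(mat_adjoint B *\<^sub>v x) $ i = (lam \<cdot>\<^sub>v y + C *\<^sub>v y) $ i"
      using i Bt C xy(1,2) by (simp add: diff_eq_eq)
  qed (use Bt C in simp)
  thus ?thesis using xy that by blast
qed

locale saddle_point_matrix =
  fixes A B C :: "complex mat" and p q :: nat
  assumes A_carrier: "A \<in> carrier_mat p p"
    and C_carrier: "C \<in> carrier_mat q q"
    and B_carrier: "B \<in> carrier_mat p q"
    and A_psd: "psd_mat A"
    and C_psd: "psd_mat C"
    and B22_bij: "bij_betw (compression B (mat_kernel A)) (mat_kernel C) (mat_kernel A)"
begin

abbreviation "RA \<equiv> mat_range A"
abbreviation "NA \<equiv> mat_kernel A"
abbreviation "RC \<equiv> mat_range C"
abbreviation "NC \<equiv> mat_kernel C"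
abbreviation "A1inv \<equiv> the_inv_into RA ((*\<^sub>v) A)"
abbreviation "C1inv \<equiv> the_inv_into RC ((*\<^sub>v) C)"
abbreviation "B12 \<equiv> compression B RA"

text \<open>The blocks \<open>B\<^sub>2\<^sub>1\<close> and \<open>B\<^sub>2\<^sub>2\<close> of the paper are the same map \<open>B2\<close>, restricted to
  \<open>RC\<close> and to \<open>NC\<close> respectively.\<close>
abbreviation "B2 \<equiv> compression B NA"
abbreviation "B22inv \<equiv> the_inv_into NC B2"
abbreviation "B21adj \<equiv> sub_adjoint RC NA B2"
abbreviation "B22invadj \<equiv> sub_adjoint NA NC B22inv"

abbreviation "n1 \<equiv> opnorm_on NA (\<lambda>y. B12 (B22inv y))"
abbreviation "n2 \<equiv> opnorm_on NC (\<lambda>y. B21adj (B22invadj y))"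
abbreviation "coupling \<equiv> max n1 n2"
abbreviation "inv_bound \<equiv> max (max (opnorm_on RA A1inv) (opnorm_on RC C1inv)) (opnorm_on NA B22inv)"

lemma A_hermitian: "hermitian_mat A"
  using psd_mat_hermitian[OF A_psd] .

lemma C_hermitian: "hermitian_mat C"
  using psd_mat_hermitian[OF C_psd] .

lemma orth_projectable:
  "csubspace p RA" "has_orth_proj p RA" "csubspace p NA" "has_orth_proj p NA"
  "csubspace q RC" "has_orth_proj q RC" "csubspace q NC" "has_orth_proj q NC"
  using mat_range_orth_projectable[OF A_carrier] mat_range_orth_projectable[OF C_carrier]
    csubspace_mat_kernel[OF A_carrier] csubspace_mat_kernel[OF C_carrier]
    has_orth_proj_mat_kernel[OF A_hermitian A_carrier] has_orth_proj_mat_kernel[OF C_hermitian C_carrier]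
  by auto

lemmas B22_inverse = bij_betw_the_inv_into_facts[OF B22_bij]

lemma linear_on_B2: "S \<subseteq> carrier_vec q \<Longrightarrow> linear_on S p B2"
  using linear_on_compression[OF B_carrier orth_projectable(3,4)] .

lemma linear_on_B22inv: "linear_on NA q B22inv"
  using linear_on_the_inv_into[OF orth_projectable(7,3) linear_on_B2 B22_bij]
    csubspace_carrier[OF orth_projectable(7)] by blast

lemma linear_on_B12_B22inv: "linear_on NA p (\<lambda>y. B12 (B22inv y))"
  using linear_on_comp[OF linear_on_B22inv B22_inverse(1) linear_on_compression[OF B_carrier orth_projectable(1,2)]]
    csubspace_carrier[OF orth_projectable(7)] by blast

lemma linear_on_B21adj: "linear_on NA q B21adj"
  using linear_on_sub_adjoint[OF orth_projectable(5,6) linear_on_B2 orth_projectable(3)]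
    csubspace_carrier[OF orth_projectable(5)] by blast

lemma linear_on_B22invadj: "linear_on NC p B22invadj"
  using linear_on_sub_adjoint[OF orth_projectable(3,4) linear_on_B22inv orth_projectable(7)] .

lemma B22invadj_in: "y \<in> carrier_vec q \<Longrightarrow> B22invadj y \<in> NA"
  using sub_adjoint_char(1)[OF orth_projectable(3,4) linear_on_B22inv] .

lemma linear_on_B21adj_B22invadj: "linear_on NC q (\<lambda>y. B21adj (B22invadj y))"
  using linear_on_comp[OF linear_on_B22invadj B22invadj_in linear_on_B21adj]
    csubspace_carrier[OF orth_projectable(7)] by blast

end

locale saddle_point_eigenpair = saddle_point_matrix +
  fixes x y :: "complex vec" and t :: real
  assumes x_carrier: "x \<in> carrier_vec p" and y_carrier: "y \<in> carrier_vec q"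
    and first_row: "A *\<^sub>v x + B *\<^sub>v y = complex_of_real t \<cdot>\<^sub>v x"
    and second_row: "mat_adjoint B *\<^sub>v x = complex_of_real t \<cdot>\<^sub>v y + C *\<^sub>v y"
begin

abbreviation "lam \<equiv> complex_of_real t"

definition "x1 = orth_proj RA x"
definition "x2 = x - x1"
definition "y1 = orth_proj RC y"
definition "y2 = y - y1"

text \<open>The decompositions are oriented as \<open>x1 + x2 = x\<close>: as simp rules the reverse ones loop,
  because \<open>x1\<close> is a constant that takes \<open>x\<close> as an argument.\<close>
lemma components:
  "x1 \<in> RA" "x2 \<in> NA" "y1 \<in> RC" "y2 \<in> NC"
  "x1 \<in> carrier_vec p" "x2 \<in> carrier_vec p" "y1 \<in> carrier_vec q" "y2 \<in> carrier_vec q"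
  "x1 + x2 = x" "y1 + y2 = y"
proof -
  note S = orth_projectable
  show x1: "x1 \<in> RA" and y1: "y1 \<in> RC"
    using orth_proj_char(1)[OF S(1,2) x_carrier] orth_proj_char(1)[OF S(5,6) y_carrier]
    unfolding x1_def y1_def by auto
  show x2: "x2 \<in> NA" and y2: "y2 \<in> NC"
    unfolding x2_def x1_def y2_def y1_def
    using hermitian_diff_orth_proj_range[OF A_hermitian A_carrier x_carrier]
      hermitian_diff_orth_proj_range[OF C_hermitian C_carrier y_carrier] by auto
  show "x1 \<in> carrier_vec p" "x2 \<in> carrier_vec p" "y1 \<in> carrier_vec q" "y2 \<in> carrier_vec q"
    using x1 x2 y1 y2 csubspace_carrier[OF S(1)] csubspace_carrier[OF S(3)]
      csubspace_carrier[OF S(5)] csubspace_carrier[OF S(7)] by auto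
  show "x1 + x2 = x" unfolding x2_def using x_carrier \<open>x1 \<in> carrier_vec p\<close> by auto
  show "y1 + y2 = y" unfolding y2_def using y_carrier \<open>y1 \<in> carrier_vec q\<close> by auto
qed

lemma energy_identity:
  "Re ((A *\<^sub>v x1) \<bullet>c x1) + Re ((C *\<^sub>v y1) \<bullet>c y1) = t * ((vnorm x)^2 - (vnorm y)^2)"
proof -
  note c = components
  have Ax1c: "A *\<^sub>v x1 \<in> carrier_vec p" using A_carrier c(5) by simp
  have Cy1c: "C *\<^sub>v y1 \<in> carrier_vec q" using C_carrier c(7) by simp
  have Byc: "B *\<^sub>v y \<in> carrier_vec p" using B_carrier y_carrier by simp
  have "(A *\<^sub>v x1) \<bullet>c x2 = 0"
    using hermitian_range_orth_kernel[OF A_hermitian A_carrier mult_mat_vec_in_mat_range[OF A_carrier c(5)] c(2)] .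
  hence AE: "(A *\<^sub>v x) \<bullet>c x = (A *\<^sub>v x1) \<bullet>c x1"
    using cscalar_prod_add_right[OF Ax1c c(5,6)] mult_add_distrib_mat_vec[OF A_carrier c(5,6)]
      mat_kernelD(2)[OF A_carrier c(2)] Ax1c by (simp add: c(9))
  have "(C *\<^sub>v y1) \<bullet>c y2 = 0"
    using hermitian_range_orth_kernel[OF C_hermitian C_carrier mult_mat_vec_in_mat_range[OF C_carrier c(7)] c(4)] .
  hence CE: "(C *\<^sub>v y) \<bullet>c y = (C *\<^sub>v y1) \<bullet>c y1"
    using cscalar_prod_add_right[OF Cy1c c(7,8)] mult_add_distrib_mat_vec[OF C_carrier c(7,8)]
      mat_kernelD(2)[OF C_carrier c(4)] Cy1c by (simp add: c(10))
  have "(A *\<^sub>v x + B *\<^sub>v y) \<bullet>c x = (lam \<cdot>\<^sub>v x) \<bullet>c x" using first_row by simp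
  hence "(A *\<^sub>v x) \<bullet>c x + (B *\<^sub>v y) \<bullet>c x = lam * (x \<bullet>c x)"
    using cscalar_prod_add_left[of "A *\<^sub>v x" p "B *\<^sub>v y" x] cscalar_prod_smult_left[OF x_carrier x_carrier]
      A_carrier Byc x_carrier by simp
  hence "Re ((A *\<^sub>v x) \<bullet>c x + (B *\<^sub>v y) \<bullet>c x) = Re (lam * (x \<bullet>c x))" by simp
  hence E1: "Re ((A *\<^sub>v x) \<bullet>c x) + Re ((B *\<^sub>v y) \<bullet>c x) = t * (vnorm x)^2"
    unfolding cscalar_prod_self_vnorm by simp
  have "(mat_adjoint B *\<^sub>v x) \<bullet>c y = (lam \<cdot>\<^sub>v y + C *\<^sub>v y) \<bullet>c y" using second_row by simp
  hence "x \<bullet>c (B *\<^sub>v y) = lam * (y \<bullet>c y) + (C *\<^sub>v y) \<bullet>c y"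
    using mat_adjoint_cscalar_prod[OF B_carrier y_carrier x_carrier]
      cscalar_prod_add_left[of "lam \<cdot>\<^sub>v y" q "C *\<^sub>v y" y] cscalar_prod_smult_left[OF y_carrier y_carrier]
      C_carrier y_carrier by simp
  moreover have "Re (x \<bullet>c (B *\<^sub>v y)) = Re ((B *\<^sub>v y) \<bullet>c x)"
    using cnj_cscalar_prod[OF Byc x_carrier] by (metis cnj.simps(1))
  ultimately have E2: "Re ((B *\<^sub>v y) \<bullet>c x) - Re ((C *\<^sub>v y) \<bullet>c y) = t * (vnorm y)^2"
    unfolding cscalar_prod_self_vnorm by simp
  show ?thesis using E1 E2 AE CE by (simp add: right_diff_distrib)
qed

lemma kernel_identity_x:
  "x2 \<bullet>c x2 + x1 \<bullet>c B12 (B22inv x2) = lam * (y2 \<bullet>c B22inv x2)"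
proof -
  note c = components and S = orth_projectable
  define z where "z = B22inv x2"
  have zN: "z \<in> NC" unfolding z_def using B22_inverse(1)[OF c(2)] .
  have zc: "z \<in> carrier_vec q" using csubspace_carrier[OF S(7) zN] .
  have Bzc: "B *\<^sub>v z \<in> carrier_vec p" using B_carrier zc by simp
  have B22z: "orth_proj NA (B *\<^sub>v z) = x2"
    using B22_inverse(2)[OF c(2)] unfolding z_def compression_def .
  have Cz: "C *\<^sub>v z = 0\<^sub>v q" using mat_kernelD(2)[OF C_carrier zN] .
  have "(mat_adjoint B *\<^sub>v x) \<bullet>c z = (lam \<cdot>\<^sub>v y + C *\<^sub>v y) \<bullet>c z" using second_row by simp
  also have "\<dots> = lam * (y \<bullet>c z) + (C *\<^sub>v y) \<bullet>c z"
    using cscalar_prod_add_left[of "lam \<cdot>\<^sub>v y" q "C *\<^sub>v y" z] cscalar_prod_smult_left[OF y_carrier zc]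
      C_carrier y_carrier zc by simp
  also have "(C *\<^sub>v y) \<bullet>c z = 0"
    using hermitian_cscalar_prod[OF C_hermitian C_carrier y_carrier zc] Cz y_carrier by simp
  also have "y \<bullet>c z = y2 \<bullet>c z"
  proof -
    have "y1 \<bullet>c z = 0" using hermitian_range_orth_kernel[OF C_hermitian C_carrier c(3) zN] .
    thus ?thesis using cscalar_prod_add_left[OF c(7,8) zc] by (simp add: c(10))
  qed
  finally have lhs: "(mat_adjoint B *\<^sub>v x) \<bullet>c z = lam * (y2 \<bullet>c z)" by simp
  have "(mat_adjoint B *\<^sub>v x) \<bullet>c z = x \<bullet>c (B *\<^sub>v z)"
    using mat_adjoint_cscalar_prod[OF B_carrier zc x_carrier] .
  also have "\<dots> = x1 \<bullet>c (B *\<^sub>v z) + x2 \<bullet>c (B *\<^sub>v z)"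
    using cscalar_prod_add_left[OF c(5,6) Bzc] by (simp add: c(9))
  also have "x1 \<bullet>c (B *\<^sub>v z) = x1 \<bullet>c B12 z"
    unfolding compression_def using cscalar_prod_orth_proj_right[OF S(1,2) Bzc c(1)] .
  also have "x2 \<bullet>c (B *\<^sub>v z) = x2 \<bullet>c x2"
    using cscalar_prod_orth_proj_right[OF S(3,4) Bzc c(2)] B22z by simp
  finally show ?thesis using lhs unfolding z_def by (simp add: add.commute)
qed

text \<open>Projecting the first row onto \<open>NA\<close> gives \<open>B\<^sub>2\<^sub>1 y1 + B\<^sub>2\<^sub>2 y2 = t x2\<close>.\<close>
lemma kernel_component_y: "y2 = lam \<cdot>\<^sub>v B22inv x2 - B22inv (B2 y1)"
proof -
  note c = components and S = orth_projectable
  have B21y1: "B2 y1 \<in> NA"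
    using orth_proj_char(1)[OF S(3,4)] B_carrier c(7) unfolding compression_def by simp
  have B21y1c: "B2 y1 \<in> carrier_vec p" using csubspace_carrier[OF S(3) B21y1] .
  have B22y2c: "B2 y2 \<in> carrier_vec p" using linear_onD(1)[OF linear_on_B2 c(4)] csubspace_carrier[OF S(7)] by blast
  have Axc: "A *\<^sub>v x \<in> carrier_vec p" using A_carrier x_carrier by simp
  have Byc: "B *\<^sub>v y \<in> carrier_vec p" using B_carrier y_carrier by simp
  have proj_x: "orth_proj NA x = x2"
    using hermitian_orth_proj_kernel[OF A_hermitian A_carrier x_carrier] unfolding x2_def x1_def .
  have proj_Ax: "orth_proj NA (A *\<^sub>v x) = 0\<^sub>v p"
    using hermitian_orth_proj_kernel[OF A_hermitian A_carrier Axc]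
      orth_proj_id[OF S(1) mult_mat_vec_in_mat_range[OF A_carrier x_carrier]] Axc by simp
  have "B *\<^sub>v y = B *\<^sub>v y1 + B *\<^sub>v y2"
    using mult_add_distrib_mat_vec[OF B_carrier c(7,8)] by (simp add: c(10))
  hence proj_By: "orth_proj NA (B *\<^sub>v y) = B2 y1 + B2 y2"
    using orth_proj_add[OF S(3,4), of "B *\<^sub>v y1" "B *\<^sub>v y2"] B_carrier c(7,8)
    unfolding compression_def by simp
  have "orth_proj NA (A *\<^sub>v x + B *\<^sub>v y) = orth_proj NA (lam \<cdot>\<^sub>v x)" using first_row by simp
  hence sum: "B2 y1 + B2 y2 = lam \<cdot>\<^sub>v x2"
    using orth_proj_add[OF S(3,4) Axc Byc] orth_proj_smult[OF S(3,4) x_carrier] proj_x proj_Ax proj_By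
      B21y1c B22y2c by simp
  have "B2 y2 = B2 y1 + B2 y2 - B2 y1" using B21y1c B22y2c by (intro eq_vecI) auto
  hence "B2 y2 = lam \<cdot>\<^sub>v x2 - B2 y1" using sum by simp
  hence "y2 = B22inv (lam \<cdot>\<^sub>v x2 - B2 y1)" using B22_inverse(3)[OF c(4)] by simp
  also have "\<dots> = lam \<cdot>\<^sub>v B22inv x2 - B22inv (B2 y1)"
    using linear_on_diff[OF S(3) linear_on_B22inv csubspace_smult[OF S(3) c(2)] B21y1]
      linear_onD(3)[OF linear_on_B22inv c(2)] by simp
  finally show ?thesis .
qed

lemma kernel_identity_y:
  "y2 \<bullet>c y2 + y1 \<bullet>c B21adj (B22invadj y2) = lam * (B22inv x2 \<bullet>c y2)"
proof -
  note c = components and S = orth_projectable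
  have B21y1: "B2 y1 \<in> NA"
    using orth_proj_char(1)[OF S(3,4)] B_carrier c(7) unfolding compression_def by simp
  have bix: "B22inv x2 \<in> carrier_vec q" using linear_onD(1)[OF linear_on_B22inv c(2)] .
  have biy: "B22inv (B2 y1) \<in> carrier_vec q" using linear_onD(1)[OF linear_on_B22inv B21y1] .
  have sc: "lam \<cdot>\<^sub>v B22inv x2 \<in> carrier_vec q" using bix by simp
  have adj_c: "B22invadj y2 \<in> carrier_vec p"
    using B22invadj_in[OF c(8)] csubspace_carrier[OF S(3)] by blast
  have "y2 \<bullet>c y2 = (lam \<cdot>\<^sub>v B22inv x2 - B22inv (B2 y1)) \<bullet>c y2"
    using kernel_component_y by simp
  also have "\<dots> = lam * (B22inv x2 \<bullet>c y2) - B22inv (B2 y1) \<bullet>c y2"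
    using cscalar_prod_diff_left[OF sc biy c(8)] cscalar_prod_smult_left[OF bix c(8)] by simp
  also have "B22inv (B2 y1) \<bullet>c y2 = B2 y1 \<bullet>c B22invadj y2"
    using sub_adjoint_char(2)[OF S(3,4) linear_on_B22inv c(8)] B21y1 by blast
  also have "\<dots> = y1 \<bullet>c B21adj (B22invadj y2)"
    using sub_adjoint_char(2)[OF S(5,6) linear_on_B2 adj_c] c(3) csubspace_carrier[OF S(5)] by blast
  finally show ?thesis by simp
qed

lemma kernel_norm_identity:
  "(vnorm x2)^2 + Re (x1 \<bullet>c B12 (B22inv x2)) = (vnorm y2)^2 + Re (y1 \<bullet>c B21adj (B22invadj y2))"
proof -
  have "Re (lam * (y2 \<bullet>c B22inv x2)) = Re (lam * (B22inv x2 \<bullet>c y2))"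
    using cnj_cscalar_prod[OF linear_onD(1)[OF linear_on_B22inv components(2)] components(8), symmetric]
    by simp
  thus ?thesis
    using arg_cong[OF kernel_identity_x, of Re] arg_cong[OF kernel_identity_y, of Re]
    by (simp add: cscalar_prod_self_vnorm)
qed

lemma vnorm_x2_le: "vnorm x2 \<le> \<bar>t\<bar> * opnorm_on NA B22inv * vnorm y2 + n1 * vnorm x1"
proof -
  note c = components and S = orth_projectable
  have G: "cmod (x1 \<bullet>c B12 (B22inv x2)) \<le> n1 * vnorm x1 * vnorm x2"
    using cmod_cscalar_prod_opnorm_on_le(1)[OF S(3,4) linear_on_B12_B22inv c(2,5)] .
  have N: "cmod (y2 \<bullet>c B22inv x2) \<le> opnorm_on NA B22inv * vnorm y2 * vnorm x2"
    using cmod_cscalar_prod_opnorm_on_le(1)[OF S(3,4) linear_on_B22inv c(2,8)] .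
  have "(vnorm x2)^2 = cmod (x2 \<bullet>c x2)" by (simp add: cscalar_prod_self_vnorm norm_power)
  also have "x2 \<bullet>c x2 = lam * (y2 \<bullet>c B22inv x2) - x1 \<bullet>c B12 (B22inv x2)"
    using kernel_identity_x by (simp add: eq_diff_eq)
  also have "cmod \<dots> \<le> cmod (lam * (y2 \<bullet>c B22inv x2)) + cmod (x1 \<bullet>c B12 (B22inv x2))"
    by (rule norm_triangle_ineq4)
  also have "\<dots> \<le> \<bar>t\<bar> * (opnorm_on NA B22inv * vnorm y2 * vnorm x2) + n1 * vnorm x1 * vnorm x2"
    using G N by (auto simp: norm_mult intro!: add_mono mult_left_mono)
  finally have "(vnorm x2)^2 \<le> vnorm x2 * (\<bar>t\<bar> * opnorm_on NA B22inv * vnorm y2 + n1 * vnorm x1)"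
    by (simp add: algebra_simps)
  moreover have "0 \<le> \<bar>t\<bar> * opnorm_on NA B22inv * vnorm y2 + n1 * vnorm x1"
    using opnorm_on_nonneg[OF S(3,4) linear_on_B22inv] opnorm_on_nonneg[OF S(3,4) linear_on_B12_B22inv]
    by (simp add: vnorm_nonneg)
  ultimately show ?thesis using le_of_power2_le_mult[OF vnorm_nonneg] by blast
qed

lemma vnorm_y2_le: "vnorm y2 \<le> \<bar>t\<bar> * opnorm_on NA B22inv * vnorm x2 + n2 * vnorm y1"
proof -
  note c = components and S = orth_projectable
  have G: "cmod (y1 \<bullet>c B21adj (B22invadj y2)) \<le> n2 * vnorm y1 * vnorm y2"
    using cmod_cscalar_prod_opnorm_on_le(1)[OF S(7,8) linear_on_B21adj_B22invadj c(4,7)] .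
  have N: "cmod (B22inv x2 \<bullet>c y2) \<le> opnorm_on NA B22inv * vnorm y2 * vnorm x2"
    using cmod_cscalar_prod_opnorm_on_le(2)[OF S(3,4) linear_on_B22inv c(2,8)] .
  have "(vnorm y2)^2 = cmod (y2 \<bullet>c y2)" by (simp add: cscalar_prod_self_vnorm norm_power)
  also have "y2 \<bullet>c y2 = lam * (B22inv x2 \<bullet>c y2) - y1 \<bullet>c B21adj (B22invadj y2)"
    using kernel_identity_y by (simp add: eq_diff_eq)
  also have "cmod \<dots> \<le> cmod (lam * (B22inv x2 \<bullet>c y2)) + cmod (y1 \<bullet>c B21adj (B22invadj y2))"
    by (rule norm_triangle_ineq4)
  also have "\<dots> \<le> \<bar>t\<bar> * (opnorm_on NA B22inv * vnorm y2 * vnorm x2) + n2 * vnorm y1 * vnorm y2"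
    using G N by (auto simp: norm_mult intro!: add_mono mult_left_mono)
  finally have "(vnorm y2)^2 \<le> vnorm y2 * (\<bar>t\<bar> * opnorm_on NA B22inv * vnorm x2 + n2 * vnorm y1)"
    by (simp add: algebra_simps)
  moreover have "0 \<le> \<bar>t\<bar> * opnorm_on NA B22inv * vnorm x2 + n2 * vnorm y1"
    using opnorm_on_nonneg[OF S(3,4) linear_on_B22inv] opnorm_on_nonneg[OF S(7,8) linear_on_B21adj_B22invadj]
    by (simp add: vnorm_nonneg)
  ultimately show ?thesis using le_of_power2_le_mult[OF vnorm_nonneg] by blast
qed

text \<open>The energy identity, with \<open>\<parallel>x\<parallel>\<^sup>2 - \<parallel>y\<parallel>\<^sup>2\<close> rewritten by the kernel norm identity, bounds the
  range components through the lower bounds \<open>\<langle>A x1, x1\<rangle> \<ge> \<parallel>x1\<parallel>\<^sup>2 / \<parallel>A\<^sub>1\<^sup>-\<^sup>1\<parallel>\<close> and likewise for \<open>C\<close>.\<close>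
lemma range_components_le:
  "(vnorm x1)^2 + (vnorm y1)^2 \<le> max (opnorm_on RA A1inv) (opnorm_on RC C1inv) *
     (\<bar>t\<bar> * ((vnorm x1)^2 + (vnorm y1)^2 + n1 * vnorm x1 * vnorm x2 + n2 * vnorm y1 * vnorm y2))"
proof -
  note c = components and S = orth_projectable
  define QA where "QA = Re ((A *\<^sub>v x1) \<bullet>c x1)"
  define QC where "QC = Re ((C *\<^sub>v y1) \<bullet>c y1)"
  define R1 where "R1 = Re (x1 \<bullet>c B12 (B22inv x2))"
  define R2 where "R2 = Re (y1 \<bullet>c B21adj (B22invadj y2))"
  define a where "a = opnorm_on RA A1inv"
  define b where "b = opnorm_on RC C1inv"
  have R1: "\<bar>R1\<bar> \<le> n1 * vnorm x1 * vnorm x2"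
    using abs_Re_le_cmod[of "x1 \<bullet>c B12 (B22inv x2)"]
      cmod_cscalar_prod_opnorm_on_le(1)[OF S(3,4) linear_on_B12_B22inv c(2,5)] unfolding R1_def by linarith
  have R2: "\<bar>R2\<bar> \<le> n2 * vnorm y1 * vnorm y2"
    using abs_Re_le_cmod[of "y1 \<bullet>c B21adj (B22invadj y2)"]
      cmod_cscalar_prod_opnorm_on_le(1)[OF S(7,8) linear_on_B21adj_B22invadj c(4,7)] unfolding R2_def by linarith
  have "(vnorm x)^2 = (vnorm x1)^2 + (vnorm x2)^2"
    using vnorm_add_power2_orthogonal[OF c(5,6) hermitian_range_orth_kernel[OF A_hermitian A_carrier c(1,2)]]
    by (simp add: c(9))
  moreover have "(vnorm y)^2 = (vnorm y1)^2 + (vnorm y2)^2"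
    using vnorm_add_power2_orthogonal[OF c(7,8) hermitian_range_orth_kernel[OF C_hermitian C_carrier c(3,4)]]
    by (simp add: c(10))
  ultimately have "(vnorm x)^2 - (vnorm y)^2 = (vnorm x1)^2 - (vnorm y1)^2 + R2 - R1"
    using kernel_norm_identity unfolding R1_def R2_def by linarith
  hence "QA + QC = t * ((vnorm x1)^2 - (vnorm y1)^2 + R2 - R1)"
    using energy_identity unfolding QA_def QC_def by simp
  also have "\<dots> \<le> \<bar>t\<bar> * \<bar>(vnorm x1)^2 - (vnorm y1)^2 + R2 - R1\<bar>"
    by (metis abs_ge_self abs_mult)
  also have "\<dots> \<le> \<bar>t\<bar> * ((vnorm x1)^2 + (vnorm y1)^2 + n1 * vnorm x1 * vnorm x2 + n2 * vnorm y1 * vnorm y2)"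
  proof (rule mult_left_mono)
    show "\<bar>(vnorm x1)^2 - (vnorm y1)^2 + R2 - R1\<bar>
        \<le> (vnorm x1)^2 + (vnorm y1)^2 + n1 * vnorm x1 * vnorm x2 + n2 * vnorm y1 * vnorm y2"
      using R1 R2 zero_le_power2[of "vnorm x1"] zero_le_power2[of "vnorm y1"]
      unfolding abs_le_iff by linarith
  qed simp
  finally have energy: "QA + QC \<le> \<dots>" .
  have "(vnorm x1)^2 + (vnorm y1)^2 \<le> a * QA + b * QC"
    using psd_mat_range_lower_bound[OF A_psd A_carrier c(1)] psd_mat_range_lower_bound[OF C_psd C_carrier c(3)]
    unfolding QA_def QC_def a_def b_def by (simp add: add_mono)
  also have "\<dots> \<le> max a b * (QA + QC)"
    using psd_mat_Re_nonneg[OF A_psd A_carrier c(5)] psd_mat_Re_nonneg[OF C_psd C_carrier c(7)]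
    unfolding QA_def QC_def by (simp add: distrib_left add_mono mult_right_mono)
  also have "\<dots> \<le> max a b * (\<bar>t\<bar> * ((vnorm x1)^2 + (vnorm y1)^2 + n1 * vnorm x1 * vnorm x2 + n2 * vnorm y1 * vnorm y2))"
    using energy opnorm_on_nonneg[OF S(1,2) linear_on_hermitian_inv_mat_range[OF A_hermitian A_carrier]]
    unfolding a_def by (intro mult_left_mono) auto
  finally show ?thesis unfolding a_def b_def .
qed

lemma eigenvector_eq_0:
  assumes small: "\<bar>t\<bar> * inv_bound * (1 + coupling)^2 < 1"
  shows "x = 0\<^sub>v p" "y = 0\<^sub>v q"
proof -
  note c = components and S = orth_projectable
  define u where "u = inv_bound * \<bar>t\<bar>"
  define a1 a2 b1 b2 where "a1 = vnorm x1" "a2 = vnorm x2" "b1 = vnorm y1" "b2 = vnorm y2"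
  have nn: "0 \<le> a1" "0 \<le> a2" "0 \<le> b1" "0 \<le> b2" unfolding a1_a2_b1_b2_def by (auto simp: vnorm_nonneg)
  have N0: "0 \<le> opnorm_on NA B22inv" using opnorm_on_nonneg[OF S(3,4) linear_on_B22inv] .
  have n0: "0 \<le> n1" "0 \<le> n2"
    using opnorm_on_nonneg[OF S(3,4) linear_on_B12_B22inv] opnorm_on_nonneg[OF S(7,8) linear_on_B21adj_B22invadj] .
  have u0: "0 \<le> u" unfolding u_def using N0 by simp
  have tN: "\<bar>t\<bar> * opnorm_on NA B22inv \<le> u" unfolding u_def by (simp add: mult_left_mono mult.commute)
  have "n1 * a1 * a2 + n2 * b1 * b2 \<le> coupling * (a1 * a2 + b1 * b2)"
    using nn by (simp add: distrib_left add_mono mult_right_mono mult.assoc)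
  hence "a1^2 + b1^2 + n1 * a1 * a2 + n2 * b1 * b2 \<le> a1^2 + b1^2 + coupling * (a1 * a2 + b1 * b2)"
    by linarith
  hence le: "\<bar>t\<bar> * (a1^2 + b1^2 + n1 * a1 * a2 + n2 * b1 * b2) \<le> \<bar>t\<bar> * (a1^2 + b1^2 + coupling * (a1 * a2 + b1 * b2))"
    by (rule mult_left_mono) simp
  have c0: "0 \<le> \<bar>t\<bar> * (a1^2 + b1^2 + n1 * a1 * a2 + n2 * b1 * b2)" using nn n0 by simp
  have "max (opnorm_on RA A1inv) (opnorm_on RC C1inv) * (\<bar>t\<bar> * (a1^2 + b1^2 + n1 * a1 * a2 + n2 * b1 * b2))
      \<le> inv_bound * (\<bar>t\<bar> * (a1^2 + b1^2 + coupling * (a1 * a2 + b1 * b2)))"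
    by (rule mult_mono[OF _ le _ c0]) (use N0 in auto)
  hence e1: "a1^2 + b1^2 \<le> u * (a1^2 + b1^2 + coupling * (a1 * a2 + b1 * b2))"
    using range_components_le unfolding u_def a1_a2_b1_b2_def by (simp add: mult.assoc)
  have "n1 * a1 \<le> coupling * a1" "n2 * b1 \<le> coupling * b1"
    using nn by (auto intro: mult_right_mono)
  moreover have "\<bar>t\<bar> * opnorm_on NA B22inv * b2 \<le> u * b2" "\<bar>t\<bar> * opnorm_on NA B22inv * a2 \<le> u * a2"
    using tN nn by (auto intro: mult_right_mono)
  ultimately have e2: "a2 \<le> u * b2 + coupling * a1" and e3: "b2 \<le> u * a2 + coupling * b1"
    using vnorm_x2_le vnorm_y2_le unfolding a1_a2_b1_b2_def by linarith+
  have "u * (1 + coupling)^2 < 1" using small unfolding u_def by (simp add: ac_simps)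
  hence "a1 = 0 \<and> a2 = 0 \<and> b1 = 0 \<and> b2 = 0"
    using small_coupling_forces_zero[OF nn u0 _ _ e1 e2 e3] n0 by simp
  hence "x1 = 0\<^sub>v p" "x2 = 0\<^sub>v p" "y1 = 0\<^sub>v q" "y2 = 0\<^sub>v q"
    unfolding a1_a2_b1_b2_def using vnorm_eq_0_iff c(5-8) by auto
  thus "x = 0\<^sub>v p" "y = 0\<^sub>v q" using c(9,10) by auto
qed

end

lemma (in saddle_point_matrix) real_eigenvalue_lower_bound:
  assumes ev: "complex_of_real t \<in> spectrum_mat (four_block_mat A B (mat_adjoint B) (- C))"
  shows "1 / ((1 + coupling)^2 * inv_bound) \<le> \<bar>t\<bar>"
proof (rule ccontr)
  assume "\<not> ?thesis"
  hence lt: "\<bar>t\<bar> < 1 / ((1 + coupling)^2 * inv_bound)" by simp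
  have "0 < (1 + coupling)^2 * inv_bound"
  proof (rule ccontr)
    assume "\<not> 0 < (1 + coupling)^2 * inv_bound"
    hence "1 / ((1 + coupling)^2 * inv_bound) \<le> 0" by (simp add: not_less)
    thus False using lt by linarith
  qed
  hence small: "\<bar>t\<bar> * inv_bound * (1 + coupling)^2 < 1"
    using lt by (simp add: less_divide_eq ac_simps)
  obtain v where "eigenvector (four_block_mat A B (mat_adjoint B) (- C)) v (complex_of_real t)"
    using ev unfolding spectrum_mat_def eigenvalue_def by blast
  then obtain x y where xy: "x \<in> carrier_vec p" "y \<in> carrier_vec q" "v = x @\<^sub>v y" "v \<noteq> 0\<^sub>v (p + q)"
      and rows: "A *\<^sub>v x + B *\<^sub>v y = complex_of_real t \<cdot>\<^sub>v x"
        "mat_adjoint B *\<^sub>v x = complex_of_real t \<cdot>\<^sub>v y + C *\<^sub>v y"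
    using saddle_point_mat_eigenvector[OF A_carrier B_carrier C_carrier] by blast
  interpret saddle_point_eigenpair A B C p q x y t
    using xy(1,2) rows by unfold_locales
  have "0\<^sub>v p @\<^sub>v 0\<^sub>v q = (0\<^sub>v (p + q) :: complex vec)" by (intro eq_vecI) auto
  thus False using eigenvector_eq_0[OF small] xy(3,4) by simp
qed

theorem theorem3p4:
  fixes A B C :: "complex mat" and p q :: nat
  assumes A_dim: "A \<in> carrier_mat p p"
    and C_dim: "C \<in> carrier_mat q q"
    and B_dim: "B \<in> carrier_mat p q"
    and A_psd: "psd_mat A"
    and C_psd: "psd_mat C"
    and dim_eq: "kernel_dim A = kernel_dim C"
    and B22_nonsing: "bij_betw (compression B (mat_kernel A)) (mat_kernel C) (mat_kernel A)"
  shows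
    "let H = four_block_mat A B (mat_adjoint B) (- C);
         RA = mat_range A; NA = mat_kernel A; RC = mat_range C; NC = mat_kernel C;
         A1inv = the_inv_into RA (\<lambda>x. A *\<^sub>v x);
         C1inv = the_inv_into RC (\<lambda>x. C *\<^sub>v x);
         B12 = compression B RA;
         B21 = compression B NA;
         B22 = compression B NA;
         B22inv = the_inv_into NC B22;
         B21adj = sub_adjoint RC NA B21;
         B22invadj = sub_adjoint NA NC B22inv;
         n1 = opnorm_on NA (\<lambda>y. B12 (B22inv y));
         n2 = opnorm_on NC (\<lambda>y. B21adj (B22invadj y));
         \<epsilon> = 1 / ((1 + max n1 n2)\<^sup>2 *
                   max (max (opnorm_on RA A1inv) (opnorm_on RC C1inv)) (opnorm_on NA B22inv))
     in {t. - \<epsilon> < t \<and> t < \<epsilon>} \<inter> {t. complex_of_real t \<in> spectrum_mat H} = {}"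
proof -
  interpret saddle_point_matrix A B C p q
    using A_dim C_dim B_dim A_psd C_psd B22_nonsing by unfold_locales
  show ?thesis
    unfolding Let_def
  proof (rule equals0I)
    fix t assume "t \<in> {t. - (1 / ((1 + coupling)^2 * inv_bound)) < t \<and> t < 1 / ((1 + coupling)^2 * inv_bound)}
      \<inter> {t. complex_of_real t \<in> spectrum_mat (four_block_mat A B (mat_adjoint B) (- C))}"
    hence "\<bar>t\<bar> < 1 / ((1 + coupling)^2 * inv_bound)"
      and "complex_of_real t \<in> spectrum_mat (four_block_mat A B (mat_adjoint B) (- C))"
      by (auto simp: abs_less_iff)
    thus False using real_eigenvalue_lower_bound[of t] by linarith
  qed
qed

end
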